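(* Let $M$ be an ACI-matrix over a field $\mathbb{F}$ and let $F_1,F_2$ be two overlapping (i.e. $F_1\cap F_2\neq\emptyset$) factor sets (resp. semifactor sets) of $M$. Then $F_1\cap F_2$ and $F_1\cup F_2$ are factor sets (resp. semifactor sets) of $M$.
   Context: Let $\mathbb{F}$ be a field. An ACI-matrix is a matrix with entries in $\mathbb{F}[x_1,\dots,x_k]$ whose entries are polynomials of degree at most one and such that no indeterminate appears in two different columns. A completion is an assignment of values in $\mathbb{F}$ to all indeterminates; $\mathrm{maxRank}(N)$ is the maximum rank of a completion. ACI-matrices (and blocks) of size $0\times q$ ($q>0$, wide degenerate), $p\times 0$ ($p>0$, tall degenerate) and $0\times0$ (void) are allowed. $N$ is FRmR if $\mathrm{maxRank}(N)=\mathrm{rows}(N)$, FCmR if $\mathrm{maxRank}(N)=\mathrm{cols}(N)$; by convention tall degenerate is FRmR, wide degenerate is FCmR, void is both. For an $m\times n$ block matrix $\begin{bmatrix} A & B\\ 0 & C\end{bmatrix}$ with lower-left $r\times s$ zero block, the zero block is Big if $r+s>\max\{m,n\}$, Medium if $r+s=\max\{m,n\}$. For $F=\{f_1<\dots<f_s\}\subseteq\{1,\dots,n\}$ with complement $\{g_1<\dots<g_{n-s}\}$, $Q_F$ is the $n\times n$ permutation matrix such that $MQ_F$ has as columns $f_1,\dots,f_s,g_1,\dots,g_{n-s}$ of $M$ in that order. For an $m\times n$ ACI-matrix $M$, $F$ is a factor set of $M$ if there is a nonsingular constant $m\times m$ matrix $R$ with $RMQ_F=\begin{bmatrix} A & B\\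 0 & C\end{bmatrix}$, where $A$ has $\#F$ columns, the zero block is Big, $A$ is FRmR and $C$ is FCmR; $F$ is a semifactor set if the same holds with the zero block Medium. *)

theory Defs
  imports "Jordan_Normal_Form.DL_Rank"
begin

text \<open>An affine polynomial (degree at most one) in the indeterminates x_1,...,x_k over 'a
  is represented by its coefficient function p :: nat => 'a:  p 0 is the constant term,
  p v (1 <= v <= k) the coefficient of x_v, and p v = 0 for v > k.\<close>

type_synonym 'a aff = "nat \<Rightarrow> 'a"

definition aff_poly :: "nat \<Rightarrow> 'a::zero aff \<Rightarrow> bool" where
  "aff_poly k p \<longleftrightarrow> (\<forall>v>k. p v = 0)"

definition aci_matrix :: "nat \<Rightarrow> 'a::zero aff mat \<Rightarrow> bool" where
  "aci_matrix k N \<longleftrightarrow>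
     (\<forall>i<dim_row N. \<forall>j<dim_col N. aff_poly k (N $$ (i,j))) \<and>
     (\<forall>v\<in>{1..k}. \<forall>i j i' j'. i < dim_row N \<longrightarrow> j < dim_col N \<longrightarrow> i' < dim_row N \<longrightarrow> j' < dim_col N \<longrightarrow>
        (N $$ (i,j)) v \<noteq> 0 \<longrightarrow> (N $$ (i',j')) v \<noteq> 0 \<longrightarrow> j = j')"

definition aff_eval :: "nat \<Rightarrow> 'a::comm_ring_1 aff \<Rightarrow> (nat \<Rightarrow> 'a) \<Rightarrow> 'a" where
  "aff_eval k p \<sigma> = p 0 + (\<Sum>v\<in>{1..k}. p v * \<sigma> v)"

definition completion :: "nat \<Rightarrow> 'a::comm_ring_1 aff mat \<Rightarrow> (nat \<Rightarrow> 'a) \<Rightarrow> 'a mat" where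
  "completion k N \<sigma> = mat (dim_row N) (dim_col N) (\<lambda>(i,j). aff_eval k (N $$ (i,j)) \<sigma>)"

definition mat_rank :: "'a::field mat \<Rightarrow> nat" where
  "mat_rank A = vec_space.rank (dim_row A) A"

definition maxRank :: "nat \<Rightarrow> 'a::field aff mat \<Rightarrow> nat" where
  "maxRank k N = Max {mat_rank (completion k N \<sigma>) | \<sigma>. True}"

text \<open>FRmR / FCmR, with the conventions for degenerate matrices
  (tall degenerate is FRmR, wide degenerate is FCmR, void is both).\<close>
definition FRmR :: "nat \<Rightarrow> 'a::field aff mat \<Rightarrow> bool" where
  "FRmR k N \<longleftrightarrow> dim_col N = 0 \<or> maxRank k N = dim_row N"

definition FCmR :: "nat \<Rightarrow> 'a::field aff mat \<Rightarrow> bool" where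
  "FCmR k N \<longleftrightarrow> dim_row N = 0 \<or> maxRank k N = dim_col N"

definition lmult :: "'a::comm_ring_1 mat \<Rightarrow> 'a aff mat \<Rightarrow> 'a aff mat" where
  "lmult R N = mat (dim_row R) (dim_col N) (\<lambda>(i,j) v. \<Sum>l<dim_col R. R $$ (i,l) * (N $$ (l,j)) v)"

definition rmult :: "'a::comm_ring_1 aff mat \<Rightarrow> 'a mat \<Rightarrow> 'a aff mat" where
  "rmult N Q = mat (dim_row N) (dim_col Q) (\<lambda>(i,j) v. \<Sum>l<dim_col N. (N $$ (i,l)) v * Q $$ (l,j))"

text \<open>Columns are indexed 0,...,n-1.  The list of column indices f_1<...<f_s, g_1<...<g_{n-s}.\<close>
definition col_order :: "nat \<Rightarrow> nat set \<Rightarrow> nat list" where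
  "col_order n F = sorted_list_of_set F @ sorted_list_of_set ({0..<n} - F)"

text \<open>Q_F: the n x n permutation matrix such that M Q_F has as columns f_1,...,f_s,g_1,...,g_{n-s}.\<close>
definition Q_mat :: "nat \<Rightarrow> nat set \<Rightarrow> 'a::comm_ring_1 mat" where
  "Q_mat n F = mat n n (\<lambda>(l,j). if l = col_order n F ! j then 1 else 0)"

text \<open>The block decomposition [A B; 0 C] of an m x n matrix P with an r x s lower-left block.\<close>
definition blockA :: "'a aff mat \<Rightarrow> nat \<Rightarrow> nat \<Rightarrow> 'a aff mat" where
  "blockA P r s = mat (dim_row P - r) s (\<lambda>(i,j). P $$ (i,j))"

definition blockC :: "'a aff mat \<Rightarrow> nat \<Rightarrow> nat \<Rightarrow> 'a aff mat" where
  "blockC P r s = mat r (dim_col P - s) (\<lambda>(i,j). P $$ (dim_row P - r + i, s + j))"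

definition zero_lower_left :: "'a::zero aff mat \<Rightarrow> nat \<Rightarrow> nat \<Rightarrow> bool" where
  "zero_lower_left P r s \<longleftrightarrow> (\<forall>i<r. \<forall>j<s. P $$ (dim_row P - r + i, j) = (\<lambda>v. 0))"

text \<open>Generic (semi)factor set definition; the predicate Z on (r,s,m,n) expresses the size
  condition on the zero block.\<close>
definition factor_like :: "(nat \<Rightarrow> nat \<Rightarrow> nat \<Rightarrow> nat \<Rightarrow> bool) \<Rightarrow> nat \<Rightarrow> 'a::field aff mat \<Rightarrow> nat set \<Rightarrow> bool" where
  "factor_like Z k M F \<longleftrightarrow> F \<subseteq> {0..<dim_col M} \<and>
     (\<exists>R r. R \<in> carrier_mat (dim_row M) (dim_row M) \<and> invertible_mat R \<and> r \<le> dim_row M \<and>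
        (let P = rmult (lmult R M) (Q_mat (dim_col M) F); s = card F in
           zero_lower_left P r s \<and> Z r s (dim_row M) (dim_col M) \<and>
           FRmR k (blockA P r s) \<and> FCmR k (blockC P r s)))"

definition factor_set :: "nat \<Rightarrow> 'a::field aff mat \<Rightarrow> nat set \<Rightarrow> bool" where
  "factor_set = factor_like (\<lambda>r s m n. r + s > max m n)"

definition semifactor_set :: "nat \<Rightarrow> 'a::field aff mat \<Rightarrow> nat set \<Rightarrow> bool" where
  "semifactor_set = factor_like (\<lambda>r s m n. r + s = max m n)"

end

theory Submission
  imports Defs
begin

(*
  A zero block of size r x |F| in R M Q_F bounds the maximal rank:
  maxRank M <= (m - r) + (n - |F|), by the rank inequalities for block upper triangular
  matrices.  For a factor or semifactor set the bound is attained, because the ACI condition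
  lets A and C be completed independently of each other.

  The zero block says exactly that the last r rows of R annihilate the columns of M indexed
  by F; they span an r-dimensional space W_F.  For two such sets, W_1 + W_2 annihilates the
  columns in F_1 \<inter> F_2, W_1 \<inter> W_2 those in F_1 \<union> F_2, and the two dimensions add up
  to r_1 + r_2.  As |F_1 \<inter> F_2| + |F_1 \<union> F_2| = |F_1| + |F_2|, the two resulting upper bounds
  on maxRank M add up to the sum of the exact values for F_1 and F_2, so both are attained.
  Attaining the bound forces A to be FRmR and C to be FCmR, and r + |F| is the same for all
  four sets, so the Big (resp. Medium) condition carries over.
*)

section \<open>Linear independence of columns and rank\<close>

definition indep_cols :: "'a::field mat \<Rightarrow> nat set \<Rightarrow> bool" where
  "indep_cols Y J \<longleftrightarrow> J \<subseteq> {..<dim_col Y} \<and>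
     (\<forall>c \<in> carrier_vec (dim_col Y). (\<forall>j<dim_col Y. j \<notin> J \<longrightarrow> c $ j = 0) \<longrightarrow>
        Y *\<^sub>v c = 0\<^sub>v (dim_row Y) \<longrightarrow> c = 0\<^sub>v (dim_col Y))"

lemma indep_colsI:
  assumes "Y \<in> carrier_mat m n" and "J \<subseteq> {..<n}"
    and "\<And>c. c \<in> carrier_vec n \<Longrightarrow> (\<And>j. j < n \<Longrightarrow> j \<notin> J \<Longrightarrow> c $ j = 0) \<Longrightarrow>
           Y *\<^sub>v c = 0\<^sub>v m \<Longrightarrow> c = 0\<^sub>v n"
  shows "indep_cols Y J"
  using assms unfolding indep_cols_def by auto

lemma indep_colsD:
  assumes "indep_cols Y J" and "Y \<in> carrier_mat m n" and "c \<in> carrier_vec n"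
    and "\<And>j. j < n \<Longrightarrow> j \<notin> J \<Longrightarrow> c $ j = 0" and "Y *\<^sub>v c = 0\<^sub>v m"
  shows "c = 0\<^sub>v n"
  using assms unfolding indep_cols_def by auto

lemma indep_cols_subset: "indep_cols Y J \<Longrightarrow> J \<subseteq> {..<dim_col Y}"
  unfolding indep_cols_def by blast

lemma indep_cols_mono: "indep_cols Y J \<Longrightarrow> J' \<subseteq> J \<Longrightarrow> indep_cols Y J'"
  unfolding indep_cols_def by blast

lemma mult_mat_vec_index_sum:
  assumes "Y \<in> carrier_mat m n" and "c \<in> carrier_vec n" and "i < m"
  shows "(Y *\<^sub>v c) $ i = (\<Sum>j<n. Y $$ (i,j) * c $ j)"
  using assms by (auto simp: mult_mat_vec_def scalar_prod_def lessThan_atLeast0 intro!: sum.cong)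

lemma indep_colsD_sum:
  assumes J: "indep_cols Y J" and Y: "Y \<in> carrier_mat m n" and c: "c \<in> carrier_vec n"
    and supp: "\<And>j. j < n \<Longrightarrow> j \<notin> J \<Longrightarrow> c $ j = 0"
    and sum: "\<And>i. i < m \<Longrightarrow> (\<Sum>j\<in>J. Y $$ (i,j) * c $ j) = 0"
  shows "c = 0\<^sub>v n"
proof (rule indep_colsD[OF J Y c supp])
  have Jn: "J \<subseteq> {..<n}" using indep_cols_subset[OF J] Y by auto
  show "Y *\<^sub>v c = 0\<^sub>v m"
  proof (rule eq_vecI)
    fix i assume "i < dim_vec (0\<^sub>v m :: 'a vec)"
    hence i: "i < m" by simp
    have "(Y *\<^sub>v c) $ i = (\<Sum>j\<in>J. Y $$ (i,j) * c $ j)"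
      unfolding mult_mat_vec_index_sum[OF Y c i]
      by (rule sum.mono_neutral_right) (use Jn supp in auto)
    thus "(Y *\<^sub>v c) $ i = 0\<^sub>v m $ i" using sum[OF i] i by simp
  qed (use Y in simp)
qed

lemma card_le_rank_if_indep_cols:
  fixes Y :: "'a::field mat"
  assumes Y: "Y \<in> carrier_mat m n" and J: "indep_cols Y J"
  shows "card J \<le> mat_rank Y"
proof -
  interpret vec_space "TYPE('a)" m .
  have Jn: "J \<subseteq> {..<n}" using indep_cols_subset[OF J] Y by auto
  have inj: "inj_on (col Y) J"
  proof
    fix j1 j2 assume j: "j1 \<in> J" "j2 \<in> J" "col Y j1 = col Y j2"
    show "j1 = j2"
    proof (rule ccontr)
      assume ne: "j1 \<noteq> j2"
      define c where "c = vec n (\<lambda>j. if j = j1 then (1::'a) else if j = j2 then -1 else 0)"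
      have "c = 0\<^sub>v n"
      proof (rule indep_colsD_sum[OF J Y])
        fix i assume i: "i < m"
        have "(\<Sum>j\<in>J. Y $$ (i,j) * c $ j) = (\<Sum>j\<in>{j1,j2}. Y $$ (i,j) * c $ j)"
          by (rule sum.mono_neutral_right) (use Jn j finite_subset in \<open>auto simp: c_def\<close>)
        also have "\<dots> = Y $$ (i,j1) - Y $$ (i,j2)" using ne Jn j by (auto simp: c_def subset_iff)
        also have "\<dots> = col Y j1 $ i - col Y j2 $ i" using Jn j(1,2) i Y by (auto simp: subset_iff)
        also have "\<dots> = 0" using j(3) by simp
        finally show "(\<Sum>j\<in>J. Y $$ (i,j) * c $ j) = 0" .
      qed (use j in \<open>auto simp: c_def\<close>)
      moreover have "c $ j1 = 1" using Jn j by (auto simp: c_def)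
      ultimately show False using Jn j by auto
    qed
  qed
  have S: "col Y ` J \<subseteq> set (cols Y)" using Jn Y by (auto simp: cols_def)
  have Scar: "col Y ` J \<subseteq> carrier_vec m" using S Y by (auto simp: cols_def)
  have "lin_indpt (col Y ` J)"
  proof
    assume "lin_dep (col Y ` J)"
    then obtain a v where a: "lincomb a (col Y ` J) = 0\<^sub>v m" "v \<in> col Y ` J" "a v \<noteq> 0"
      using finite_lin_dep[OF _ _ Scar] finite_subset[OF Jn] by blast
    define c where "c = vec n (\<lambda>j. if j \<in> J then a (col Y j) else 0)"
    have "c = 0\<^sub>v n"
    proof (rule indep_colsD_sum[OF J Y])
      fix i assume i: "i < m"
      have "(\<Sum>j\<in>J. Y $$ (i,j) * c $ j) = (\<Sum>j\<in>J. a (col Y j) * col Y j $ i)"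
        using Jn i Y by (intro sum.cong) (auto simp: c_def)
      also have "\<dots> = lincomb a (col Y ` J) $ i"
        using sum.reindex[OF inj, of "\<lambda>x. a x * x $ i"] lincomb_index[OF i Scar] by simp
      finally show "(\<Sum>j\<in>J. Y $$ (i,j) * c $ j) = 0" using a(1) i by simp
    qed (auto simp: c_def)
    moreover obtain j where "j \<in> J" "v = col Y j" using a(2) by auto
    ultimately show False using a(3) Jn by (auto simp: c_def dest!: arg_cong[of _ _ "\<lambda>x. x $ j"])
  qed
  hence "card (col Y ` J) \<le> rank Y" using rank_ge_card_indpt[OF Y S] by blast
  thus ?thesis using card_image[OF inj] Y unfolding mat_rank_def by simp
qed

lemma indep_cols_of_rank:
  fixes Y :: "'a::field mat"
  assumes Y: "Y \<in> carrier_mat m n"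
  obtains J where "indep_cols Y J" and "card J = mat_rank Y"
proof -
  interpret vec_space "TYPE('a)" m .
  obtain S where S: "maximal S (\<lambda>T. T \<subseteq> set (cols Y) \<and> lin_indpt T)"
    using maximal_exists[of "\<lambda>T. T \<subseteq> set (cols Y) \<and> lin_indpt T" "card (set (cols Y))" "{}"]
    by (meson List.finite_set card_mono empty_iff empty_subsetI finite_lin_indpt2 rev_finite_subset)
  have Sc: "S \<subseteq> set (cols Y)" and li: "lin_indpt S" using S unfolding maximal_def by auto
  have Scar: "S \<subseteq> carrier_vec m" using Sc Y by (auto simp: cols_def)
  have finS: "finite S" using Sc finite_subset by blast
  define idx where "idx x = (SOME j. j < n \<and> col Y j = x)" for x
  have idx: "idx x < n \<and> col Y (idx x) = x" if "x \<in> S" for x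
  proof -
    have "\<exists>j. j < n \<and> col Y j = x" using that Sc Y by (force simp: cols_def)
    thus ?thesis unfolding idx_def by (rule someI_ex)
  qed
  have inj: "inj_on idx S" by (metis idx inj_onI)
  have "indep_cols Y (idx ` S)"
  proof (rule indep_colsI[OF Y])
    show "idx ` S \<subseteq> {..<n}" using idx by auto
    fix c :: "'a vec" assume c: "c \<in> carrier_vec n"
      and supp: "\<And>j. j < n \<Longrightarrow> j \<notin> idx ` S \<Longrightarrow> c $ j = 0" and z: "Y *\<^sub>v c = 0\<^sub>v m"
    have "lincomb (\<lambda>x. c $ idx x) S = 0\<^sub>v m"
    proof (rule eq_vecI)
      fix i assume "i < dim_vec (0\<^sub>v m :: 'a vec)"
      hence i: "i < m" by simp
      have "lincomb (\<lambda>x. c $ idx x) S $ i = (\<Sum>x\<in>S. Y $$ (i, idx x) * c $ idx x)"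
        unfolding lincomb_index[OF i Scar]
        by (intro sum.cong refl) (metis idx i Y carrier_matD index_col mult.commute)
      also have "\<dots> = (\<Sum>j\<in>idx ` S. Y $$ (i,j) * c $ j)"
        using sum.reindex[OF inj, of "\<lambda>j. Y $$ (i,j) * c $ j"] by simp
      also have "\<dots> = (Y *\<^sub>v c) $ i" unfolding mult_mat_vec_index_sum[OF Y c i]
        by (rule sum.mono_neutral_left) (use idx supp in auto)
      finally show "lincomb (\<lambda>x. c $ idx x) S $ i = 0\<^sub>v m $ i" using z i by simp
    qed (simp add: lincomb_dim[OF finS Scar])
    hence coeff: "c $ idx x = 0" if "x \<in> S" for x
      using li lin_dep_crit[OF finS subset_refl, where a = "\<lambda>x. c $ idx x" and v = x] that by auto
    show "c = 0\<^sub>v n"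
      by (rule eq_vecI) (use c supp coeff in auto)
  qed
  moreover have "card (idx ` S) = mat_rank Y"
    using card_image[OF inj] rank_card_indpt[OF Y S] Y unfolding mat_rank_def by simp
  ultimately show thesis by (rule that)
qed

lemma rank_le_dim_row:
  fixes Y :: "'a::field mat"
  assumes Y: "Y \<in> carrier_mat m n"
  shows "mat_rank Y \<le> m"
proof -
  interpret vec_space "TYPE('a)" m .
  obtain S where S: "maximal S (\<lambda>T. T \<subseteq> set (cols Y) \<and> lin_indpt T)"
    using maximal_exists[of "\<lambda>T. T \<subseteq> set (cols Y) \<and> lin_indpt T" "card (set (cols Y))" "{}"]
    by (meson List.finite_set card_mono empty_iff empty_subsetI finite_lin_indpt2 rev_finite_subset)
  have Sc: "S \<subseteq> set (cols Y)" and li: "lin_indpt S" using S unfolding maximal_def by auto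
  have "S \<subseteq> carrier_vec m" using Sc Y by (auto simp: cols_def)
  hence "card S \<le> dim" using li_le_dim(2)[OF fin_dim _ li] by simp
  thus ?thesis using rank_card_indpt[OF Y S] dim_is_n Y unfolding mat_rank_def by simp
qed

lemma rank_le_dim_col:
  fixes Y :: "'a::field mat"
  assumes "Y \<in> carrier_mat m n"
  shows "mat_rank Y \<le> n"
  using vec_space.rank_le_nc[OF assms] assms unfolding mat_rank_def by simp

lemma rank_le_rank_if_kernel_subset:
  fixes X Y :: "'a::field mat"
  assumes X: "X \<in> carrier_mat m n" and Y: "Y \<in> carrier_mat m' n"
    and ker: "\<And>c. c \<in> carrier_vec n \<Longrightarrow> X *\<^sub>v c = 0\<^sub>v m \<Longrightarrow> Y *\<^sub>v c = 0\<^sub>v m'"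
  shows "mat_rank Y \<le> mat_rank X"
proof -
  obtain J where J: "indep_cols Y J" "card J = mat_rank Y" using indep_cols_of_rank[OF Y] .
  have "indep_cols X J"
    by (rule indep_colsI[OF X]) (use indep_cols_subset[OF J(1)] Y indep_colsD[OF J(1) Y] ker in auto)
  from card_le_rank_if_indep_cols[OF X this] show ?thesis using J(2) by simp
qed

lemma invertible_mat_inverse:
  fixes R :: "'a::comm_ring_1 mat"
  assumes R: "R \<in> carrier_mat m m" and inv: "invertible_mat R"
  obtains B where "B \<in> carrier_mat m m" "B * R = 1\<^sub>m m" "R * B = 1\<^sub>m m"
proof -
  obtain B where B: "R * B = 1\<^sub>m m" "B * R = 1\<^sub>m (dim_row B)"
    using inv R unfolding invertible_mat_def inverts_mat_def by auto
  have "B \<in> carrier_mat m m"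
    using B R by (metis carrier_matD carrier_matI index_mult_mat(2,3) index_one_mat(2,3))
  thus thesis using B that by (metis carrier_matD(1))
qed

lemma invertible_mat_transpose:
  fixes R :: "'a::comm_ring_1 mat"
  assumes R: "R \<in> carrier_mat m m" and inv: "invertible_mat R"
  shows "invertible_mat (transpose_mat R)"
proof -
  obtain B where B: "B \<in> carrier_mat m m" "B * R = 1\<^sub>m m" "R * B = 1\<^sub>m m"
    using invertible_mat_inverse[OF R inv] .
  have "transpose_mat B * transpose_mat R = transpose_mat (R * B)" using transpose_mult[OF R B(1)] ..
  hence BR: "transpose_mat B * transpose_mat R = 1\<^sub>m m" using B(3) by simp
  have "transpose_mat R * transpose_mat B = transpose_mat (B * R)" using transpose_mult[OF B(1) R] ..
  hence RB: "transpose_mat R * transpose_mat B = 1\<^sub>m m" using B(2) by simp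
  show ?thesis using R B(1) BR RB unfolding invertible_mat_def inverts_mat_def by auto
qed

lemma invertible_mult_vec_eq_zero:
  fixes R :: "'a::comm_ring_1 mat"
  assumes R: "R \<in> carrier_mat m m" and inv: "invertible_mat R" and x: "x \<in> carrier_vec m"
    and "R *\<^sub>v x = 0\<^sub>v m"
  shows "x = 0\<^sub>v m"
proof -
  obtain B where B: "B \<in> carrier_mat m m" "B * R = 1\<^sub>m m" using invertible_mat_inverse[OF R inv] .
  have "x = (B * R) *\<^sub>v x" using B x by simp
  also have "\<dots> = B *\<^sub>v (R *\<^sub>v x)" using assoc_mult_mat_vec[OF B(1) R x] .
  finally show ?thesis using assms(4) B by auto
qed

lemma indep_cols_invertible:
  fixes R :: "'a::field mat"
  assumes "R \<in> carrier_mat m m" and "invertible_mat R"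
  shows "indep_cols R {..<m}"
  by (rule indep_colsI[OF assms(1)]) (use invertible_mult_vec_eq_zero[OF assms] in auto)

lemma rank_mult_invertible:
  fixes R Y :: "'a::field mat"
  assumes R: "R \<in> carrier_mat m m" and inv: "invertible_mat R" and Y: "Y \<in> carrier_mat m n"
  shows "mat_rank (R * Y) = mat_rank Y"
proof (rule antisym)
  have RY: "R * Y \<in> carrier_mat m n" using R Y by simp
  show "mat_rank (R * Y) \<le> mat_rank Y"
    by (rule rank_le_rank_if_kernel_subset[OF Y RY]) (use R Y in auto)
  show "mat_rank Y \<le> mat_rank (R * Y)"
    by (rule rank_le_rank_if_kernel_subset[OF RY Y])
      (use R Y invertible_mult_vec_eq_zero[OF R inv] in auto)
qed

lemma rank_permute_cols:
  assumes Y: "Y \<in> carrier_mat m n" and \<pi>: "bij_betw \<pi> {..<n} {..<n}"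
  shows "mat_rank (mat m n (\<lambda>(i,j). Y $$ (i, \<pi> j))) = mat_rank Y"
proof -
  have "set (cols (mat m n (\<lambda>(i,j). Y $$ (i, \<pi> j)))) = col Y ` \<pi> ` {..<n}"
    using bij_betwE[OF \<pi>] Y by (force simp: cols_def image_image intro!: image_cong eq_vecI)
  also have "\<dots> = set (cols Y)" using bij_betw_imp_surj_on[OF \<pi>] Y by (auto simp: cols_def)
  finally show ?thesis using Y unfolding mat_rank_def vec_space.rank_def by simp
qed

lemma indep_cols_square_invertible:
  fixes W :: "'a::field mat"
  assumes W: "W \<in> carrier_mat m m" and ind: "indep_cols W {..<m}"
  shows "invertible_mat W"
proof -
  have "mat_rank W = m" using card_le_rank_if_indep_cols[OF W ind] rank_le_dim_col[OF W] by simp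
  hence "det W \<noteq> 0" using vec_space.det_rank_iff[OF W] W unfolding mat_rank_def by simp
  from det_non_zero_imp_unit[OF W this, unfolded Units_def, of "()"]
  obtain B where "B \<in> carrier_mat m m" "B * W = 1\<^sub>m m" "W * B = 1\<^sub>m m"
    by (auto simp: ring_mat_def)
  thus ?thesis using W unfolding invertible_mat_def inverts_mat_def by auto
qed

lemma indep_cols_select_iff:
  fixes Y :: "'a::field mat"
  assumes Y: "Y \<in> carrier_mat m n" and inj: "inj_on \<iota> {..<p}" and range: "\<iota> ` {..<p} \<subseteq> {..<n}"
  shows "indep_cols (mat m p (\<lambda>(i,j). Y $$ (i, \<iota> j))) {..<p} \<longleftrightarrow> indep_cols Y (\<iota> ` {..<p})"
    (is "indep_cols ?Y' _ \<longleftrightarrow> _")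
proof -
  have Y': "?Y' \<in> carrier_mat m p" by simp
  have mult: "Y *\<^sub>v c = ?Y' *\<^sub>v vec p (\<lambda>j. c $ \<iota> j)"
    if c: "c \<in> carrier_vec n" and supp: "\<And>l. l < n \<Longrightarrow> l \<notin> \<iota> ` {..<p} \<Longrightarrow> c $ l = 0" for c
  proof (rule eq_vecI)
    fix i assume "i < dim_vec (?Y' *\<^sub>v vec p (\<lambda>j. c $ \<iota> j))"
    hence i: "i < m" by simp
    have "(Y *\<^sub>v c) $ i = (\<Sum>l\<in>\<iota> ` {..<p}. Y $$ (i,l) * c $ l)"
      unfolding mult_mat_vec_index_sum[OF Y c i]
      by (rule sum.mono_neutral_right) (use range supp in auto)
    also have "\<dots> = (\<Sum>j<p. Y $$ (i, \<iota> j) * c $ \<iota> j)" by (rule sum.reindex[OF inj, unfolded comp_def])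
    also have "\<dots> = (?Y' *\<^sub>v vec p (\<lambda>j. c $ \<iota> j)) $ i"
      using mult_mat_vec_index_sum[OF Y' _ i] i by simp
    finally show "(Y *\<^sub>v c) $ i = (?Y' *\<^sub>v vec p (\<lambda>j. c $ \<iota> j)) $ i" .
  qed (use Y in simp)
  show ?thesis
  proof
    assume ind': "indep_cols ?Y' {..<p}"
    show "indep_cols Y (\<iota> ` {..<p})"
    proof (rule indep_colsI[OF Y range])
      fix c :: "'a vec" assume c: "c \<in> carrier_vec n"
        and supp: "\<And>l. l < n \<Longrightarrow> l \<notin> \<iota> ` {..<p} \<Longrightarrow> c $ l = 0" and z: "Y *\<^sub>v c = 0\<^sub>v m"
      have "vec p (\<lambda>j. c $ \<iota> j) = 0\<^sub>v p"
        by (rule indep_colsD[OF ind' Y']) (use mult[OF c supp] z in auto)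
      hence "c $ \<iota> j = 0" if "j < p" for j
        using that by (metis index_vec index_zero_vec(1))
      thus "c = 0\<^sub>v n" using c supp by (intro eq_vecI) auto
    qed
  next
    assume ind: "indep_cols Y (\<iota> ` {..<p})"
    show "indep_cols ?Y' {..<p}"
    proof (rule indep_colsI[OF Y'])
      fix c :: "'a vec"
      assume c: "c \<in> carrier_vec p" and "\<And>j. j < p \<Longrightarrow> j \<notin> {..<p} \<Longrightarrow> c $ j = 0"
        and z: "?Y' *\<^sub>v c = 0\<^sub>v m"
      define c' where "c' = vec n (\<lambda>l. if l \<in> \<iota> ` {..<p} then c $ the_inv_into {..<p} \<iota> l else 0)"
      have c'c: "c' \<in> carrier_vec n" and supp: "\<And>l. l < n \<Longrightarrow> l \<notin> \<iota> ` {..<p} \<Longrightarrow> c' $ l = 0"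
        unfolding c'_def by auto
      have restr: "vec p (\<lambda>j. c' $ \<iota> j) = c"
        using c range inj by (intro eq_vecI) (auto simp: c'_def the_inv_into_f_f)
      have "Y *\<^sub>v c' = ?Y' *\<^sub>v c" using mult[OF c'c supp] unfolding restr .
      hence "c' = 0\<^sub>v n" using indep_colsD[OF ind Y c'c supp] z by simp
      thus "c = 0\<^sub>v p" using restr c range by (intro eq_vecI) auto
    qed simp
  qed
qed

lemma indep_cols_append_cols:
  fixes W1 W2 :: "'a::field mat"
  assumes W1: "W1 \<in> carrier_mat m r1" and W2: "W2 \<in> carrier_mat m r2"
  defines "Z \<equiv> mat m (r1 + r2) (\<lambda>(l,t). if t < r1 then W1 $$ (l,t) else W2 $$ (l, t - r1))"
  shows "indep_cols W1 {..<r1} \<Longrightarrow> indep_cols Z {..<r1}"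
    and "indep_cols W2 {..<r2} \<Longrightarrow> indep_cols Z ((+) r1 ` {..<r2})"
    and "t < r1 \<Longrightarrow> col Z t = col W1 t"
    and "t < r2 \<Longrightarrow> col Z (r1 + t) = col W2 t"
proof -
  have Z: "Z \<in> carrier_mat m (r1 + r2)" unfolding Z_def by simp
  have "mat m r1 (\<lambda>(i,j). Z $$ (i, id j)) = W1" unfolding Z_def using W1 by (intro eq_matI) auto
  thus "indep_cols W1 {..<r1} \<Longrightarrow> indep_cols Z {..<r1}"
    using indep_cols_select_iff[OF Z, of id r1] by simp
  have "mat m r2 (\<lambda>(i,j). Z $$ (i, r1 + j)) = W2" unfolding Z_def using W2 by (intro eq_matI) auto
  moreover have "(+) r1 ` {..<r2} \<subseteq> {..<r1 + r2}" by auto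
  ultimately show "indep_cols W2 {..<r2} \<Longrightarrow> indep_cols Z ((+) r1 ` {..<r2})"
    using indep_cols_select_iff[OF Z, of "(+) r1" r2] by simp
  show "t < r1 \<Longrightarrow> col Z t = col W1 t" unfolding Z_def using W1 by (intro eq_vecI) auto
  show "t < r2 \<Longrightarrow> col Z (r1 + t) = col W2 t" unfolding Z_def using W2 by (intro eq_vecI) auto
qed

lemma rank_le_if_lower_rows_zero:
  fixes Y :: "'a::field mat"
  assumes Y: "Y \<in> carrier_mat m n" and km: "k \<le> m"
    and zero: "\<And>i j. k \<le> i \<Longrightarrow> i < m \<Longrightarrow> j < n \<Longrightarrow> Y $$ (i,j) = 0"
  shows "mat_rank Y \<le> k"
proof -
  let ?Y' = "mat k n (\<lambda>(i,j). Y $$ (i,j))"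
  have "mat_rank Y \<le> mat_rank ?Y'"
  proof (rule rank_le_rank_if_kernel_subset[OF _ Y])
    fix c :: "'a vec" assume c: "c \<in> carrier_vec n" and z: "?Y' *\<^sub>v c = 0\<^sub>v k"
    show "Y *\<^sub>v c = 0\<^sub>v m"
    proof (rule eq_vecI)
      fix i assume "i < dim_vec (0\<^sub>v m :: 'a vec)"
      hence i: "i < m" by simp
      show "(Y *\<^sub>v c) $ i = 0\<^sub>v m $ i"
      proof (cases "i < k")
        case True
        have "(Y *\<^sub>v c) $ i = (\<Sum>j<n. ?Y' $$ (i,j) * c $ j)"
          using mult_mat_vec_index_sum[OF Y c i] True by simp
        also have "\<dots> = (?Y' *\<^sub>v c) $ i"
          by (rule mult_mat_vec_index_sum[symmetric]) (use c True in auto)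
        also have "\<dots> = 0" unfolding z using True by simp
        finally show ?thesis using i by simp
      qed (use mult_mat_vec_index_sum[OF Y c i] zero i in simp)
    qed (use Y in simp)
  qed simp
  thus ?thesis using rank_le_dim_row[of ?Y' k n] by simp
qed

section \<open>Block upper triangular matrices\<close>

lemma zero_append_zero_vec [simp]: "0\<^sub>v n1 @\<^sub>v 0\<^sub>v n2 = (0\<^sub>v (n1 + n2) :: 'a::zero vec)"
  by (intro eq_vecI) auto

lemma append_vec_eq_zero_iff:
  assumes "v \<in> carrier_vec n1" and "w \<in> carrier_vec n2"
  shows "v @\<^sub>v w = 0\<^sub>v (n1 + n2) \<longleftrightarrow> v = 0\<^sub>v n1 \<and> w = (0\<^sub>v n2 :: 'a::zero vec)"
  using append_vec_eq[OF assms(1), of "0\<^sub>v n1" w "0\<^sub>v n2"] by simp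

lemma zero_mat_mult_vec [simp]: "v \<in> carrier_vec n \<Longrightarrow> 0\<^sub>m m n *\<^sub>v v = (0\<^sub>v m :: 'a::semiring_0 vec)"
  by (intro eq_vecI) auto

lemma mult_mat_vec_zero_vec [simp]: "A \<in> carrier_mat m n \<Longrightarrow> A *\<^sub>v 0\<^sub>v n = (0\<^sub>v m :: 'a::semiring_0 vec)"
  by (intro eq_vecI) auto

lemma upper_block_mult_append_vec:
  fixes A :: "'a::comm_ring_1 mat"
  assumes A: "A \<in> carrier_mat m1 n1" and B: "B \<in> carrier_mat m1 n2" and C: "C \<in> carrier_mat m2 n2"
    and a: "a \<in> carrier_vec n1" and d: "d \<in> carrier_vec n2"
  shows "four_block_mat A B (0\<^sub>m m2 n1) C *\<^sub>v (a @\<^sub>v d) = (A *\<^sub>v a + B *\<^sub>v d) @\<^sub>v (C *\<^sub>v d)"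
  using four_block_mat_mult_vec[OF A B _ C a d] a C d by simp

lemma rank_upper_block_le_left:
  fixes A :: "'a::field mat"
  assumes A: "A \<in> carrier_mat m1 n1" and B: "B \<in> carrier_mat m1 n2" and C: "C \<in> carrier_mat m2 n2"
  shows "mat_rank (four_block_mat A B (0\<^sub>m m2 n1) C) \<le> mat_rank A + n2"
proof -
  let ?X = "four_block_mat A B (0\<^sub>m m2 n1) C"
  have X: "?X \<in> carrier_mat (m1 + m2) (n1 + n2)" using A C by simp
  obtain J where J: "indep_cols ?X J" "card J = mat_rank ?X" using indep_cols_of_rank[OF X] .
  have "indep_cols A (J \<inter> {..<n1})"
  proof (rule indep_colsI[OF A])
    fix a :: "'a vec" assume a: "a \<in> carrier_vec n1"
      and supp: "\<And>j. j < n1 \<Longrightarrow> j \<notin> J \<inter> {..<n1} \<Longrightarrow> a $ j = 0" and z: "A *\<^sub>v a = 0\<^sub>v m1"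
    have "a @\<^sub>v 0\<^sub>v n2 = 0\<^sub>v (n1 + n2)"
    proof (rule indep_colsD[OF J(1) X])
      show "?X *\<^sub>v (a @\<^sub>v 0\<^sub>v n2) = 0\<^sub>v (m1 + m2)"
        using upper_block_mult_append_vec[OF A B C a] z B C append_vec_eq_zero_iff by simp
    qed (use a supp in auto)
    thus "a = 0\<^sub>v n1" using append_vec_eq_zero_iff[OF a] by simp
  qed auto
  hence "card (J \<inter> {..<n1}) \<le> mat_rank A" by (rule card_le_rank_if_indep_cols[OF A])
  moreover have "card (J - {..<n1}) \<le> n2"
    using card_mono[of "{n1..<n1+n2}" "J - {..<n1}"] indep_cols_subset[OF J(1)] X by fastforce
  moreover have "card J = card (J \<inter> {..<n1}) + card (J - {..<n1})"
    using card_Int_Diff finite_subset[OF indep_cols_subset[OF J(1)]] by blast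
  ultimately show ?thesis using J(2) by linarith
qed

lemma rank_upper_block_ge:
  fixes A :: "'a::field mat"
  assumes A: "A \<in> carrier_mat m1 n1" and B: "B \<in> carrier_mat m1 n2" and C: "C \<in> carrier_mat m2 n2"
  shows "mat_rank A + mat_rank C \<le> mat_rank (four_block_mat A B (0\<^sub>m m2 n1) C)"
proof -
  let ?X = "four_block_mat A B (0\<^sub>m m2 n1) C"
  have X: "?X \<in> carrier_mat (m1 + m2) (n1 + n2)" using A C by simp
  obtain JA where JA: "indep_cols A JA" "card JA = mat_rank A" using indep_cols_of_rank[OF A] .
  obtain JC where JC: "indep_cols C JC" "card JC = mat_rank C" using indep_cols_of_rank[OF C] .
  have JAn: "JA \<subseteq> {..<n1}" and JCn: "JC \<subseteq> {..<n2}"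
    using indep_cols_subset[OF JA(1)] indep_cols_subset[OF JC(1)] A C by auto
  define J where "J = JA \<union> (+) n1 ` JC"
  have "indep_cols ?X J"
  proof (rule indep_colsI[OF X])
    show "J \<subseteq> {..<n1 + n2}" using JAn JCn unfolding J_def by auto
    fix c :: "'a vec" assume c: "c \<in> carrier_vec (n1 + n2)"
      and supp: "\<And>j. j < n1 + n2 \<Longrightarrow> j \<notin> J \<Longrightarrow> c $ j = 0" and z: "?X *\<^sub>v c = 0\<^sub>v (m1 + m2)"
    define a where "a = vec_first c n1"
    define d where "d = vec_last c n2"
    have a: "a \<in> carrier_vec n1" and d: "d \<in> carrier_vec n2" and c_eq: "c = a @\<^sub>v d"
      using c unfolding a_def d_def by auto
    have d_idx: "d $ j = c $ (n1 + j)" if "j < n2" for j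
      using c that unfolding d_def vec_last_def by auto
    have "A *\<^sub>v a + B *\<^sub>v d \<in> carrier_vec m1" "C *\<^sub>v d \<in> carrier_vec m2" using A B C a d by auto
    moreover have "(A *\<^sub>v a + B *\<^sub>v d) @\<^sub>v (C *\<^sub>v d) = 0\<^sub>v (m1 + m2)"
      using z upper_block_mult_append_vec[OF A B C a d] c_eq by simp
    ultimately have top: "A *\<^sub>v a + B *\<^sub>v d = 0\<^sub>v m1" and bot: "C *\<^sub>v d = 0\<^sub>v m2"
      using append_vec_eq_zero_iff by blast+
    have "d = 0\<^sub>v n2"
    proof (rule indep_colsD[OF JC(1) C d _ bot])
      fix j assume j: "j < n2" "j \<notin> JC"
      have "n1 + j \<notin> J" using JAn j(2) unfolding J_def by auto
      thus "d $ j = 0" using supp[of "n1 + j"] d_idx j(1) by simp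
    qed
    hence "A *\<^sub>v a = 0\<^sub>v m1" using top A B a by simp
    moreover have "a $ j = 0" if "j < n1" "j \<notin> JA" for j
    proof -
      have "j \<notin> J" using that unfolding J_def by auto
      thus ?thesis using supp[of j] that unfolding a_def vec_first_def by simp
    qed
    ultimately have "a = 0\<^sub>v n1" using indep_colsD[OF JA(1) A a] by blast
    thus "c = 0\<^sub>v (n1 + n2)" using c_eq \<open>d = 0\<^sub>v n2\<close> append_vec_eq_zero_iff[of a n1 d n2] a d by simp
  qed
  hence "card J \<le> mat_rank ?X" by (rule card_le_rank_if_indep_cols[OF X])
  moreover have "card J = card JA + card JC"
  proof -
    have "card J = card JA + card ((+) n1 ` JC)"
      unfolding J_def using JAn finite_subset[OF JAn] finite_subset[OF JCn]
      by (intro card_Un_disjoint) auto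
    thus ?thesis by (simp add: card_image)
  qed
  ultimately show ?thesis using JA(2) JC(2) by simp
qed

lemma rank_lower_right_block_le:
  fixes C :: "'a::field mat"
  assumes C: "C \<in> carrier_mat m2 n2"
  shows "mat_rank (four_block_mat (0\<^sub>m m1 n1) (0\<^sub>m m1 n2) (0\<^sub>m m2 n1) C) \<le> mat_rank C"
proof -
  let ?Y = "four_block_mat (0\<^sub>m m1 n1) (0\<^sub>m m1 n2) (0\<^sub>m m2 n1) C"
  have Y: "?Y \<in> carrier_mat (m1 + m2) (n1 + n2)" using C by simp
  have mult: "?Y *\<^sub>v (a @\<^sub>v d) = 0\<^sub>v m1 @\<^sub>v (C *\<^sub>v d)"
    if "a \<in> carrier_vec n1" "d \<in> carrier_vec n2" for a d
    using upper_block_mult_append_vec[OF zero_carrier_mat zero_carrier_mat C that] that C by simp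
  obtain J where J: "indep_cols ?Y J" "card J = mat_rank ?Y" using indep_cols_of_rank[OF Y] .
  have Jn: "J \<subseteq> {..<n1 + n2}" using indep_cols_subset[OF J(1)] C by auto
  have J_right: "n1 \<le> j" if "j \<in> J" for j
  proof (rule ccontr)
    assume "\<not> n1 \<le> j"
    have kern: "?Y *\<^sub>v (unit_vec n1 j @\<^sub>v 0\<^sub>v n2) = 0\<^sub>v (m1 + m2)"
      using mult[of "unit_vec n1 j" "0\<^sub>v n2"] C by simp
    have "unit_vec n1 j @\<^sub>v 0\<^sub>v n2 = (0\<^sub>v (n1 + n2) :: 'a vec)"
      by (rule indep_colsD[OF J(1) Y _ _ kern]) (use that \<open>\<not> n1 \<le> j\<close> in auto)
    moreover have "(unit_vec n1 j @\<^sub>v 0\<^sub>v n2 :: 'a vec) $ j = 1" using \<open>\<not> n1 \<le> j\<close> by simp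
    ultimately show False using \<open>\<not> n1 \<le> j\<close> by simp
  qed
  have shift_eq: "j = j'" if "j \<in> J" "n1 \<le> j'" "j - n1 = j' - n1" for j j'
    using J_right[OF that(1)] that(2,3) by arith
  have inj: "inj_on (\<lambda>j. j - n1) J" using shift_eq J_right by (intro inj_onI) blast
  have "indep_cols C ((\<lambda>j. j - n1) ` J)"
  proof (rule indep_colsI[OF C])
    show "(\<lambda>j. j - n1) ` J \<subseteq> {..<n2}" using Jn J_right by force
    fix d :: "'a vec" assume d: "d \<in> carrier_vec n2"
      and supp: "\<And>j. j < n2 \<Longrightarrow> j \<notin> (\<lambda>j. j - n1) ` J \<Longrightarrow> d $ j = 0" and z: "C *\<^sub>v d = 0\<^sub>v m2"
    have "0\<^sub>v n1 @\<^sub>v d = 0\<^sub>v (n1 + n2)"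
    proof (rule indep_colsD[OF J(1) Y])
      fix l assume l: "l < n1 + n2" "l \<notin> J"
      show "(0\<^sub>v n1 @\<^sub>v d) $ l = 0"
      proof (cases "l < n1")
        case False
        have "l - n1 \<notin> (\<lambda>j. j - n1) ` J"
        proof
          assume "l - n1 \<in> (\<lambda>j. j - n1) ` J"
          then obtain j where "j \<in> J" "j - n1 = l - n1" by auto
          thus False using shift_eq[of j l] False l(2) by auto
        qed
        thus ?thesis using False l d supp[of "l - n1"] by simp
      qed (use d in simp)
    qed (use d z mult in simp_all)
    thus "d = 0\<^sub>v n2" using append_vec_eq_zero_iff[of "0\<^sub>v n1" n1 d n2] d by simp
  qed
  from card_le_rank_if_indep_cols[OF C this] show ?thesis using J(2) card_image[OF inj] by simp
qed

lemma rank_upper_block_le_right: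
  fixes A :: "'a::field mat"
  assumes A: "A \<in> carrier_mat m1 n1" and B: "B \<in> carrier_mat m1 n2" and C: "C \<in> carrier_mat m2 n2"
  shows "mat_rank (four_block_mat A B (0\<^sub>m m2 n1) C) \<le> m1 + mat_rank C"
proof -
  let ?T = "four_block_mat A B (0\<^sub>m m2 n1) (0\<^sub>m m2 n2)"
  let ?L = "four_block_mat (0\<^sub>m m1 n1) (0\<^sub>m m1 n2) (0\<^sub>m m2 n1) C"
  have T: "?T \<in> carrier_mat (m1 + m2) (n1 + n2)" and L: "?L \<in> carrier_mat (m1 + m2) (n1 + n2)"
    using A C by auto
  have "four_block_mat A B (0\<^sub>m m2 n1) C = ?T + ?L"
    by (rule eq_matI) (use A B C in auto)
  hence "mat_rank (four_block_mat A B (0\<^sub>m m2 n1) C) \<le> mat_rank ?T + mat_rank ?L"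
    using vec_space.rank_subadditive[OF T L] A C unfolding mat_rank_def by simp
  moreover have "mat_rank ?T \<le> m1"
    by (rule rank_le_if_lower_rows_zero[OF T]) (use A B in auto)
  ultimately show ?thesis using rank_lower_right_block_le[OF C, of m1 n1] by linarith
qed

section \<open>Column spans\<close>

definition in_col_span :: "'a::comm_ring_1 mat \<Rightarrow> nat set \<Rightarrow> 'a vec \<Rightarrow> bool" where
  "in_col_span Z S w \<longleftrightarrow>
     (\<exists>c \<in> carrier_vec (dim_col Z). (\<forall>t<dim_col Z. t \<notin> S \<longrightarrow> c $ t = 0) \<and> w = Z *\<^sub>v c)"

lemma mult_mat_vec_unit_vec:
  fixes Z :: "'a::comm_ring_1 mat"
  assumes Z: "Z \<in> carrier_mat m N" and t: "t < N"
  shows "Z *\<^sub>v unit_vec N t = col Z t"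
proof (rule eq_vecI)
  fix i assume "i < dim_vec (col Z t)"
  hence i: "i < m" using Z by simp
  have "(Z *\<^sub>v unit_vec N t) $ i = (\<Sum>j<N. if j = t then Z $$ (i,j) else 0)"
    unfolding mult_mat_vec_index_sum[OF Z unit_vec_carrier i] by (intro sum.cong) (auto simp: unit_vec_def)
  thus "(Z *\<^sub>v unit_vec N t) $ i = col Z t $ i" using t i Z by simp
qed (use Z in simp)

lemma in_col_span_col:
  assumes Z: "Z \<in> carrier_mat m N" and t: "t \<in> S" "t < N"
  shows "in_col_span Z S (col Z t)"
  using mult_mat_vec_unit_vec[OF Z t(2)] Z t unfolding in_col_span_def
  by (intro bexI[of _ "unit_vec N t"]) auto

lemma in_col_span_mult_vec:
  assumes "Z \<in> carrier_mat m N" and "c \<in> carrier_vec N" and "\<And>t. t < N \<Longrightarrow> t \<notin> S \<Longrightarrow> c $ t = 0"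
  shows "in_col_span Z S (Z *\<^sub>v c)"
  using assms unfolding in_col_span_def by auto

lemma ex_unit_vec_not_in_col_span:
  fixes W :: "'a::field mat"
  assumes W: "W \<in> carrier_mat m r" and rm: "r < m"
  obtains l where "l < m" and "\<not> in_col_span W {..<r} (unit_vec m l)"
proof (rule ccontr)
  assume "\<not> thesis"
  hence "\<forall>l<m. \<exists>c\<in>carrier_vec r. W *\<^sub>v c = unit_vec m l"
    using that W unfolding in_col_span_def by force
  then obtain cf where cf: "\<And>l. l < m \<Longrightarrow> cf l \<in> carrier_vec r \<and> W *\<^sub>v cf l = unit_vec m l"
    by metis
  define X where "X = mat r m (\<lambda>(t,l). cf l $ t)"
  have X: "X \<in> carrier_mat r m" unfolding X_def by simp
  have WX: "W * X = 1\<^sub>m m"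
  proof (rule eq_matI)
    fix i l assume "i < dim_row (1\<^sub>m m :: 'a mat)" "l < dim_col (1\<^sub>m m :: 'a mat)"
    hence i: "i < m" and l: "l < m" by auto
    have "col X l = cf l" using cf[OF l] l unfolding X_def by (intro eq_vecI) auto
    hence "(W * X) $$ (i,l) = (W *\<^sub>v cf l) $ i" using W X i l by simp
    thus "(W * X) $$ (i,l) = 1\<^sub>m m $$ (i,l)" using cf[OF l] i l by simp
  qed (use W X in auto)
  have "indep_cols X {..<m}"
  proof (rule indep_colsI[OF X])
    fix c :: "'a vec" assume c: "c \<in> carrier_vec m" and "X *\<^sub>v c = 0\<^sub>v r"
    moreover have "c = (W * X) *\<^sub>v c" using WX c by simp
    ultimately show "c = 0\<^sub>v m" using W X c by simp
  qed simp
  hence "m \<le> r" using card_le_rank_if_indep_cols[OF X] rank_le_dim_row[OF X] by fastforce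
  thus False using rm by simp
qed

lemma indep_cols_cons_col:
  fixes W :: "'a::field mat"
  assumes W: "W \<in> carrier_mat m r" and ind: "indep_cols W {..<r}" and u: "u \<in> carrier_vec m"
    and u_span: "\<not> in_col_span W {..<r} u"
  shows "indep_cols (mat m (Suc r) (\<lambda>(l,t). if t = 0 then u $ l else W $$ (l, t - 1))) {..<Suc r}"
    (is "indep_cols ?W _")
proof (rule indep_colsI)
  show W': "?W \<in> carrier_mat m (Suc r)" by simp
  fix c :: "'a vec" assume c: "c \<in> carrier_vec (Suc r)" and z: "?W *\<^sub>v c = 0\<^sub>v m"
  define c' where "c' = vec r (\<lambda>t. c $ Suc t)"
  have c': "c' \<in> carrier_vec r" unfolding c'_def by simp
  have split: "(?W *\<^sub>v c) $ i = c $ 0 * u $ i + (W *\<^sub>v c') $ i" if i: "i < m" for i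
  proof -
    have "(?W *\<^sub>v c) $ i = ?W $$ (i,0) * c $ 0 + (\<Sum>t<r. ?W $$ (i, Suc t) * c $ Suc t)"
      unfolding mult_mat_vec_index_sum[OF W' c i] by (rule sum.lessThan_Suc_shift)
    thus ?thesis using i unfolding mult_mat_vec_index_sum[OF W c' i] by (simp add: c'_def mult.commute)
  qed
  have c0: "c $ 0 = 0"
  proof (rule ccontr)
    assume nz: "c $ 0 \<noteq> 0"
    have "u = W *\<^sub>v (- (1 / c $ 0) \<cdot>\<^sub>v c')"
    proof (rule eq_vecI)
      fix i assume "i < dim_vec (W *\<^sub>v (- (1 / c $ 0) \<cdot>\<^sub>v c'))"
      hence i: "i < m" using W by simp
      have "c $ 0 * u $ i = - (W *\<^sub>v c') $ i"
        using split[OF i] arg_cong[OF z, of "\<lambda>v. v $ i"] i by (simp add: eq_neg_iff_add_eq_0)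
      thus "u $ i = (W *\<^sub>v (- (1 / c $ 0) \<cdot>\<^sub>v c')) $ i"
        using nz i W c' unfolding mult_mat_vec[OF W c'] by (simp add: field_simps)
    qed (use u W in simp)
    thus False using u_span c' W unfolding in_col_span_def by auto
  qed
  have "W *\<^sub>v c' = 0\<^sub>v m"
    by (rule eq_vecI) (use split arg_cong[OF z, of "\<lambda>v. v $ _"] c0 W in auto)
  hence "c' = 0\<^sub>v r" using indep_colsD[OF ind W c'] by simp
  show "c = 0\<^sub>v (Suc r)"
  proof (rule eq_vecI)
    fix j assume "j < dim_vec (0\<^sub>v (Suc r) :: 'a vec)"
    thus "c $ j = 0\<^sub>v (Suc r) $ j"
      using c0 \<open>c' = 0\<^sub>v r\<close> by (cases j) (auto simp: c'_def dest: arg_cong[of _ _ "\<lambda>v. v $ (j - 1)"])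
  qed (use c in simp)
qed simp

lemma invertible_mat_with_last_rows:
  fixes W :: "'a::field mat"
  assumes "W \<in> carrier_mat m p" and "indep_cols W {..<p}"
  shows "\<exists>R. R \<in> carrier_mat m m \<and> invertible_mat R \<and>
           (\<forall>t<p. \<forall>l<m. R $$ (m - p + t, l) = W $$ (l, t))"
  using assms
proof (induction "m - p" arbitrary: p W)
  case 0
  have "p \<le> m" using card_le_rank_if_indep_cols[OF 0(2,3)] rank_le_dim_row[OF 0(2)] by simp
  hence p: "p = m" using 0(1) by simp
  have W: "W \<in> carrier_mat m m" using 0(2) p by simp
  have "invertible_mat (transpose_mat W)"
    using invertible_mat_transpose[OF W indep_cols_square_invertible[OF W]] 0(3) p by simp
  thus ?case using W p by (intro exI[of _ "transpose_mat W"]) auto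
next
  case (Suc d)
  have pm: "p < m" using Suc(2) by simp
  obtain l0 where l0: "l0 < m" "\<not> in_col_span W {..<p} (unit_vec m l0)"
    using ex_unit_vec_not_in_col_span[OF Suc(3) pm] .
  let ?W = "mat m (Suc p) (\<lambda>(l,t). if t = 0 then unit_vec m l0 $ l else W $$ (l, t - 1))"
  have "indep_cols ?W {..<Suc p}" using indep_cols_cons_col[OF Suc(3,4) _ l0(2)] by simp
  moreover have "d = m - Suc p" using Suc(2) by simp
  ultimately obtain R where R: "R \<in> carrier_mat m m" "invertible_mat R"
    "\<forall>t<Suc p. \<forall>l<m. R $$ (m - Suc p + t, l) = ?W $$ (l, t)"
    using Suc(1)[of "Suc p" ?W] by auto
  have "R $$ (m - p + t, l) = W $$ (l, t)" if "t < p" "l < m" for t l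
    using R(3)[rule_format, of "Suc t" l] that pm by (simp add: Suc_diff_Suc)
  thus ?case using R(1,2) by blast
qed

lemma maximal_indep_cols_between:
  assumes A: "indep_cols Z A" and AS: "A \<subseteq> S" and S: "finite S"
  obtains J where "A \<subseteq> J" "J \<subseteq> S" "indep_cols Z J"
    "\<And>b. b \<in> S - J \<Longrightarrow> \<not> indep_cols Z (insert b J)"
proof -
  let ?P = "\<lambda>J. A \<subseteq> J \<and> J \<subseteq> S \<and> indep_cols Z J"
  have "\<forall>J. ?P J \<longrightarrow> card J < Suc (card S)" using card_mono[OF S] by (simp add: le_imp_less_Suc)
  then obtain J where J: "?P J" and greatest: "\<forall>J'. ?P J' \<longrightarrow> card J' \<le> card J"
    using ex_has_greatest_nat[of ?P A card "Suc (card S)"] A AS by blast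
  have "\<not> indep_cols Z (insert b J)" if "b \<in> S - J" for b
  proof
    assume "indep_cols Z (insert b J)"
    hence "card (insert b J) \<le> card J" using greatest[rule_format, of "insert b J"] J that by auto
    thus False using that finite_subset[OF _ S] J by simp
  qed
  thus thesis using that J by blast
qed

lemma col_in_col_span_if_dependent:
  fixes Z :: "'a::field mat"
  assumes Z: "Z \<in> carrier_mat m N" and J: "indep_cols Z J" and b: "b < N" "b \<notin> J"
    and dep: "\<not> indep_cols Z (insert b J)"
  shows "in_col_span Z J (col Z b)"
proof -
  have "insert b J \<subseteq> {..<N}" using indep_cols_subset[OF J] b Z by auto
  then obtain c where c: "c \<in> carrier_vec N" "\<And>t. t < N \<Longrightarrow> t \<notin> insert b J \<Longrightarrow> c $ t = 0"
    "Z *\<^sub>v c = 0\<^sub>v m" "c \<noteq> 0\<^sub>v N"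
    using dep Z unfolding indep_cols_def by auto
  have cb: "c $ b \<noteq> 0"
  proof
    assume "c $ b = 0"
    hence "c = 0\<^sub>v N" using indep_colsD[OF J Z c(1) _ c(3)] c(2) by (metis insertE)
    thus False using c(4) by simp
  qed
  define c' where "c' = vec N (\<lambda>t. if t = b then 0 else - c $ t / c $ b)"
  have c': "c' \<in> carrier_vec N" "\<forall>t<N. t \<notin> J \<longrightarrow> c' $ t = 0"
    using c(2) unfolding c'_def by auto
  have "Z *\<^sub>v c' = col Z b"
  proof (rule eq_vecI)
    fix i assume "i < dim_vec (col Z b)"
    hence i: "i < m" using Z by simp
    have "0 = (\<Sum>t<N. Z $$ (i,t) * c $ t)"
      using arg_cong[OF c(3), of "\<lambda>v. v $ i"] mult_mat_vec_index_sum[OF Z c(1) i] i by simp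
    also have "\<dots> = Z $$ (i,b) * c $ b + (\<Sum>t\<in>{..<N} - {b}. Z $$ (i,t) * c $ t)"
      using b by (simp add: sum.remove)
    finally have "(\<Sum>t\<in>{..<N} - {b}. Z $$ (i,t) * c $ t) = - (Z $$ (i,b) * c $ b)"
      by (simp add: eq_neg_iff_add_eq_0 add.commute)
    moreover have "(Z *\<^sub>v c') $ i = (\<Sum>t\<in>{..<N} - {b}. Z $$ (i,t) * c' $ t)"
      unfolding mult_mat_vec_index_sum[OF Z c'(1) i] using b
      by (intro sum.mono_neutral_right) (auto simp: c'_def)
    moreover have "\<dots> = - (\<Sum>t\<in>{..<N} - {b}. Z $$ (i,t) * c $ t) / c $ b"
      unfolding sum_divide_distrib sum_negf[symmetric] by (intro sum.cong) (auto simp: c'_def)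
    ultimately show "(Z *\<^sub>v c') $ i = col Z b $ i" using cb i b Z by simp
  qed (use Z in simp)
  thus ?thesis using Z c' unfolding in_col_span_def by auto
qed

lemma indep_cols_mult_unit_rows:
  fixes Z D :: "'a::field mat"
  assumes Z: "Z \<in> carrier_mat m N" and iB: "indep_cols Z B" and D: "D \<in> carrier_mat N q"
    and supp: "\<And>t j. t < N \<Longrightarrow> t \<notin> B \<Longrightarrow> j < q \<Longrightarrow> D $$ (t,j) = 0"
    and \<kappa>: "\<And>j. j < q \<Longrightarrow> \<kappa> j < N"
    and unit_rows: "\<And>j j'. j < q \<Longrightarrow> j' < q \<Longrightarrow> D $$ (\<kappa> j, j') = (if j' = j then 1 else 0)"
  shows "indep_cols (Z * D) {..<q}"
proof (rule indep_colsI)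
  show ZD: "Z * D \<in> carrier_mat m q" using Z D by simp
  fix x :: "'a vec" assume x: "x \<in> carrier_vec q" and z: "(Z * D) *\<^sub>v x = 0\<^sub>v m"
  have Dx: "D *\<^sub>v x \<in> carrier_vec N" using D x by simp
  have "Z *\<^sub>v (D *\<^sub>v x) = 0\<^sub>v m" using z x Z D by simp
  moreover have "(D *\<^sub>v x) $ t = 0" if "t < N" "t \<notin> B" for t
    unfolding mult_mat_vec_index_sum[OF D x that(1)] using supp that by simp
  ultimately have Dx0: "D *\<^sub>v x = 0\<^sub>v N" using indep_colsD[OF iB Z Dx] by blast
  show "x = 0\<^sub>v q"
  proof (rule eq_vecI)
    fix j assume "j < dim_vec (0\<^sub>v q :: 'a vec)"
    hence j: "j < q" by simp
    have "0 = (D *\<^sub>v x) $ \<kappa> j" using Dx0 \<kappa>[OF j] by simp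
    also have "\<dots> = (\<Sum>j'<q. (if j' = j then 1 else 0) * x $ j')"
      unfolding mult_mat_vec_index_sum[OF D x \<kappa>[OF j]] using unit_rows[OF j] by simp
    also have "\<dots> = (\<Sum>j'<q. if j' = j then x $ j' else 0)" by (intro sum.cong) auto
    also have "\<dots> = x $ j" using j by simp
    finally show "x $ j = 0\<^sub>v q $ j" using j by simp
  qed (use x in simp)
qed simp

lemma mult_mat_vec_split_col:
  fixes Z :: "'a::field mat"
  assumes Z: "Z \<in> carrier_mat m N" and disj: "A \<inter> B = {}" and b: "b < N" "b \<in> B"
    and c: "c \<in> carrier_vec N" "\<And>t. t < N \<Longrightarrow> t \<notin> (A \<union> B) - {b} \<Longrightarrow> c $ t = 0"
    and col: "col Z b = Z *\<^sub>v c"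
  shows "Z *\<^sub>v vec N (\<lambda>t. if t \<in> A then c $ t else 0) =
         Z *\<^sub>v vec N (\<lambda>t. if t = b then 1 else if t \<in> B then - c $ t else 0)"
proof -
  let ?a = "vec N (\<lambda>t. if t \<in> A then c $ t else 0)"
  have "vec N (\<lambda>t. if t = b then 1 else if t \<in> B then - c $ t else 0) = ?a + (unit_vec N b - c)"
    by (rule eq_vecI) (use b c disj in \<open>auto simp: unit_vec_def\<close>)
  hence "Z *\<^sub>v vec N (\<lambda>t. if t = b then 1 else if t \<in> B then - c $ t else 0) =
      Z *\<^sub>v ?a + (Z *\<^sub>v unit_vec N b - Z *\<^sub>v c)"
    using Z c(1) by (simp add: mult_add_distrib_mat_vec mult_minus_distrib_mat_vec)
  also have "\<dots> = Z *\<^sub>v ?a"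
    unfolding mult_mat_vec_unit_vec[OF Z b(1)] col[symmetric] using col_dim[of Z b] Z by simp
  finally show ?thesis ..
qed

lemma indep_cols_common_span:
  fixes Z :: "'a::field mat"
  assumes Z: "Z \<in> carrier_mat m N" and disj: "A \<inter> B = {}" and iB: "indep_cols Z B"
    and \<kappa>: "bij_betw \<kappa> {..<q} K" and KB: "K \<subseteq> B" and S: "S \<subseteq> A \<union> B" "S \<inter> K = {}"
    and span: "\<And>b. b \<in> K \<Longrightarrow> in_col_span Z S (col Z b)"
  obtains WU where "WU \<in> carrier_mat m q" and "indep_cols WU {..<q}"
    and "\<And>j. j < q \<Longrightarrow> in_col_span Z A (col WU j)" and "\<And>j. j < q \<Longrightarrow> in_col_span Z B (col WU j)"
proof -
  have BN: "B \<subseteq> {..<N}" using indep_cols_subset[OF iB] Z by auto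
  have \<kappa>K: "\<kappa> j \<in> K" if "j < q" for j using bij_betwE[OF \<kappa>] that by simp
  have \<kappa>N: "\<kappa> j < N" if "j < q" for j using \<kappa>K[OF that] KB BN by auto
  have "\<forall>b\<in>K. \<exists>cb. cb \<in> carrier_vec N \<and> (\<forall>t<N. t \<notin> S \<longrightarrow> cb $ t = 0) \<and> col Z b = Z *\<^sub>v cb"
    using span Z unfolding in_col_span_def by fastforce
  from bchoice[OF this] obtain c where c: "\<And>b. b \<in> K \<Longrightarrow> c b \<in> carrier_vec N \<and>
      (\<forall>t<N. t \<notin> S \<longrightarrow> c b $ t = 0) \<and> col Z b = Z *\<^sub>v c b"
    by blast
  \<comment> \<open>Column \<open>j\<close> of \<open>Z * DA\<close> and of \<open>Z * DB\<close> is the part of \<open>col Z (\<kappa> j)\<close> spanned by \<open>A\<close>,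
    written once through \<open>A\<close> and once through \<open>B\<close>.\<close>
  define DA where "DA = mat N q (\<lambda>(t,j). if t \<in> A then c (\<kappa> j) $ t else 0)"
  define DB where "DB = mat N q (\<lambda>(t,j). if t = \<kappa> j then 1 else if t \<in> B then - c (\<kappa> j) $ t else 0)"
  have DA: "DA \<in> carrier_mat N q" and DB: "DB \<in> carrier_mat N q" unfolding DA_def DB_def by auto
  have DB_diag: "DB $$ (\<kappa> j, j') = (if j' = j then 1 else 0)" if "j < q" "j' < q" for j j'
  proof -
    have "\<kappa> j \<notin> S" using \<kappa>K[OF that(1)] S(2) by auto
    moreover have "(\<kappa> j = \<kappa> j') = (j = j')"
      using bij_betw_imp_inj_on[OF \<kappa>] that by (auto dest: inj_onD)
    ultimately show ?thesis using c[OF \<kappa>K[OF that(2)]] \<kappa>N that unfolding DB_def by auto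
  qed
  have ZDA_ZDB: "Z * DA = Z * DB"
  proof (rule mat_col_eqI)
    fix j assume "j < dim_col (Z * DB)"
    hence j: "j < q" using DB by simp
    have "\<kappa> j \<notin> S" "\<kappa> j \<in> B" using \<kappa>K[OF j] S(2) KB by auto
    hence "Z *\<^sub>v col DA j = Z *\<^sub>v col DB j"
      unfolding DA_def DB_def using mult_mat_vec_split_col[OF Z disj \<kappa>N[OF j]] c[OF \<kappa>K[OF j]] j S(1)
      by auto
    thus "col (Z * DA) j = col (Z * DB) j" unfolding col_mult2[OF Z DA j] col_mult2[OF Z DB j] .
  qed (use DA DB in auto)
  have DB_supp: "DB $$ (t,j) = 0" if "t < N" "t \<notin> B" "j < q" for t j
    using that \<kappa>K KB unfolding DB_def by auto
  have WU: "Z * DA \<in> carrier_mat m q" using Z DA by simp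
  have "indep_cols (Z * DA) {..<q}"
    unfolding ZDA_ZDB by (rule indep_cols_mult_unit_rows[OF Z iB DB DB_supp \<kappa>N DB_diag])
  moreover have "in_col_span Z A (col (Z * DA) j)" if "j < q" for j
  proof -
    have "DA $$ (t,j) = 0" if "t < N" "t \<notin> A" for t using that \<open>j < q\<close> unfolding DA_def by simp
    thus ?thesis using in_col_span_mult_vec[OF Z, of "col DA j" A] col_mult2[OF Z DA that] that DA by simp
  qed
  moreover have "in_col_span Z B (col (Z * DA) j)" if "j < q" for j
    using in_col_span_mult_vec[OF Z, of "col DB j" B] col_mult2[OF Z DB that] that DB DB_supp
    unfolding ZDA_ZDB by simp
  ultimately show thesis using that WU by blast
qed

lemma indep_cols_sum_and_intersection:
  fixes Z :: "'a::field mat"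
  assumes Z: "Z \<in> carrier_mat m N" and disj: "A \<inter> B = {}"
    and iA: "indep_cols Z A" and iB: "indep_cols Z B"
  obtains p q WI WU where "p + q = card A + card B"
    and "WI \<in> carrier_mat m p" and "indep_cols WI {..<p}"
    and "\<And>j. j < p \<Longrightarrow> in_col_span Z (A \<union> B) (col WI j)"
    and "WU \<in> carrier_mat m q" and "indep_cols WU {..<q}"
    and "\<And>j. j < q \<Longrightarrow> in_col_span Z A (col WU j)" and "\<And>j. j < q \<Longrightarrow> in_col_span Z B (col WU j)"
proof -
  have AB: "A \<union> B \<subseteq> {..<N}" using indep_cols_subset[OF iA] indep_cols_subset[OF iB] Z by auto
  hence fin: "finite (A \<union> B)" using finite_subset by blast
  obtain J where J: "A \<subseteq> J" "J \<subseteq> A \<union> B" "indep_cols Z J"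
    and maximal: "\<And>b. b \<in> (A \<union> B) - J \<Longrightarrow> \<not> indep_cols Z (insert b J)"
    using maximal_indep_cols_between[OF iA _ fin] by blast
  define K where "K = B - J"
  have finJ: "finite J" and finK: "finite K" using J(2) fin finite_subset unfolding K_def by auto
  obtain \<iota> where \<iota>: "bij_betw \<iota> {..<card J} J"
    using ex_bij_betw_nat_finite[OF finJ] by (auto simp: atLeast0LessThan)
  obtain \<kappa> where \<kappa>: "bij_betw \<kappa> {..<card K} K"
    using ex_bij_betw_nat_finite[OF finK] by (auto simp: atLeast0LessThan)
  let ?WI = "mat m (card J) (\<lambda>(i,j). Z $$ (i, \<iota> j))"
  have \<iota>J: "\<iota> ` {..<card J} = J" using bij_betw_imp_surj_on[OF \<iota>] .
  have JN: "J \<subseteq> {..<N}" using J(2) AB by auto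
  have WI_ind: "indep_cols ?WI {..<card J}"
    using indep_cols_select_iff[OF Z bij_betw_imp_inj_on[OF \<iota>]] \<iota>J J(3) JN by simp
  have WI_span: "in_col_span Z (A \<union> B) (col ?WI j)" if "j < card J" for j
  proof -
    have "\<iota> j \<in> J" using \<iota>J that by auto
    hence "col ?WI j = col Z (\<iota> j)" and "\<iota> j \<in> A \<union> B" "\<iota> j < N"
      using that Z J(2) JN by (auto intro!: eq_vecI)
    thus ?thesis using in_col_span_col[OF Z] by simp
  qed
  have KB: "K \<subseteq> B" and JK: "J \<inter> K = {}" unfolding K_def by auto
  moreover have "in_col_span Z J (col Z b)" if "b \<in> K" for b
    using col_in_col_span_if_dependent[OF Z J(3)] maximal AB that unfolding K_def by auto
  ultimately obtain WU where "WU \<in> carrier_mat m (card K)" "indep_cols WU {..<card K}"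
    "\<And>j. j < card K \<Longrightarrow> in_col_span Z A (col WU j)" "\<And>j. j < card K \<Longrightarrow> in_col_span Z B (col WU j)"
    using indep_cols_common_span[OF Z disj iB \<kappa> _ J(2)] by metis
  moreover have "card J + card K = card A + card B"
  proof -
    have finA: "finite A" and finB: "finite B" using fin by auto
    have "J = A \<union> (J \<inter> B)" using J(1,2) by blast
    hence "card J = card A + card (J \<inter> B)"
      using card_Un_disjoint[OF finA, of "J \<inter> B"] finB disj by auto
    moreover have "K = B - (J \<inter> B)" unfolding K_def by blast
    hence "card K = card B - card (J \<inter> B)" using card_Diff_subset[of "J \<inter> B" B] finB by auto
    moreover have "card (J \<inter> B) \<le> card B" using finB by (intro card_mono) auto
    ultimately show ?thesis by simp
  qed
  ultimately show thesis using that[of "card J" "card K" ?WI] WI_ind WI_span by auto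
qed

section \<open>Completions and maximal rank\<close>

lemma aff_eval_lincomb:
  fixes a :: "nat \<Rightarrow> 'a::comm_ring_1"
  shows "aff_eval k (\<lambda>v. \<Sum>l<m. a l * p l v) \<sigma> = (\<Sum>l<m. a l * aff_eval k (p l) \<sigma>)"
proof -
  have "aff_eval k (\<lambda>v. \<Sum>l<m. a l * p l v) \<sigma> =
        (\<Sum>l<m. a l * p l 0) + (\<Sum>v\<in>{1..k}. \<Sum>l<m. a l * p l v * \<sigma> v)"
    unfolding aff_eval_def by (simp add: sum_distrib_right)
  also have "(\<Sum>v\<in>{1..k}. \<Sum>l<m. a l * p l v * \<sigma> v) = (\<Sum>l<m. \<Sum>v\<in>{1..k}. a l * p l v * \<sigma> v)"
    by (rule sum.swap)
  finally show ?thesis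
    unfolding aff_eval_def by (simp add: sum.distrib distrib_left sum_distrib_left mult.assoc)
qed

lemma completion_carrier [simp]: "completion k N \<sigma> \<in> carrier_mat (dim_row N) (dim_col N)"
  unfolding completion_def by simp

lemma completion_index [simp]:
  "i < dim_row N \<Longrightarrow> j < dim_col N \<Longrightarrow> completion k N \<sigma> $$ (i,j) = aff_eval k (N $$ (i,j)) \<sigma>"
  unfolding completion_def by simp

lemma completion_dims [simp]:
  "dim_row (completion k N \<sigma>) = dim_row N" "dim_col (completion k N \<sigma>) = dim_col N"
  unfolding completion_def by simp_all

lemma maxRank_finite: "finite {mat_rank (completion k (N :: 'a::field aff mat) \<sigma>) | \<sigma>. True}"
proof (rule finite_subset)
  show "{mat_rank (completion k N \<sigma>) | \<sigma>. True} \<subseteq> {..dim_col N}"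
    using rank_le_dim_col[OF completion_carrier] by auto
qed simp

lemma rank_completion_le_maxRank: "mat_rank (completion k (N :: 'a::field aff mat) \<sigma>) \<le> maxRank k N"
  unfolding maxRank_def using maxRank_finite by (intro Max_ge) auto

lemma maxRank_attained:
  obtains \<sigma> where "mat_rank (completion k (N :: 'a::field aff mat) \<sigma>) = maxRank k N"
proof -
  have "maxRank k N \<in> {mat_rank (completion k N \<sigma>) | \<sigma>. True}"
    unfolding maxRank_def using maxRank_finite by (intro Max_in) auto
  thus thesis using that by auto
qed

lemma maxRank_leI:
  "(\<And>\<sigma>. mat_rank (completion k (N :: 'a::field aff mat) \<sigma>) \<le> b) \<Longrightarrow> maxRank k N \<le> b"
  by (metis maxRank_attained)

lemma completion_upper_block:
  fixes P :: "'a::comm_ring_1 aff mat"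
  assumes z: "zero_lower_left P r s" and r: "r \<le> dim_row P" and s: "s \<le> dim_col P"
  shows "completion k P \<sigma> = four_block_mat (completion k (blockA P r s) \<sigma>)
     (mat (dim_row P - r) (dim_col P - s) (\<lambda>(i,j). aff_eval k (P $$ (i, s + j)) \<sigma>))
     (0\<^sub>m r s) (completion k (blockC P r s) \<sigma>)"
proof (rule eq_matI)
  fix i j assume "i < dim_row (four_block_mat (completion k (blockA P r s) \<sigma>)
     (mat (dim_row P - r) (dim_col P - s) (\<lambda>(i,j). aff_eval k (P $$ (i, s + j)) \<sigma>))
     (0\<^sub>m r s) (completion k (blockC P r s) \<sigma>))"
    "j < dim_col (four_block_mat (completion k (blockA P r s) \<sigma>)
     (mat (dim_row P - r) (dim_col P - s) (\<lambda>(i,j). aff_eval k (P $$ (i, s + j)) \<sigma>))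
     (0\<^sub>m r s) (completion k (blockC P r s) \<sigma>))"
  hence i: "i < dim_row P" and j: "j < dim_col P" using r s by (auto simp: blockA_def blockC_def)
  have "aff_eval k (P $$ (i,j)) \<sigma> = 0" if "dim_row P - r \<le> i" "j < s"
  proof -
    have "i - (dim_row P - r) < r" using that(1) i by arith
    hence "P $$ (dim_row P - r + (i - (dim_row P - r)), j) = (\<lambda>v. 0)"
      using z that(2) unfolding zero_lower_left_def by blast
    moreover have "dim_row P - r + (i - (dim_row P - r)) = i" using that(1) by simp
    ultimately show ?thesis by (simp add: aff_eval_def)
  qed
  thus "completion k P \<sigma> $$ (i,j) = four_block_mat (completion k (blockA P r s) \<sigma>)
     (mat (dim_row P - r) (dim_col P - s) (\<lambda>(i,j). aff_eval k (P $$ (i, s + j)) \<sigma>))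
     (0\<^sub>m r s) (completion k (blockC P r s) \<sigma>) $$ (i,j)"
    using i j r s by (auto simp: blockA_def blockC_def)
qed (use r s in \<open>auto simp: blockA_def blockC_def\<close>)

lemma rank_completion_upper_block:
  fixes P :: "'a::field aff mat"
  assumes z: "zero_lower_left P r s" and r: "r \<le> dim_row P" and s: "s \<le> dim_col P"
  shows "mat_rank (completion k P \<sigma>) \<le> mat_rank (completion k (blockA P r s) \<sigma>) + (dim_col P - s)"
    and "mat_rank (completion k P \<sigma>) \<le> (dim_row P - r) + mat_rank (completion k (blockC P r s) \<sigma>)"
    and "mat_rank (completion k (blockA P r s) \<sigma>) + mat_rank (completion k (blockC P r s) \<sigma>)
           \<le> mat_rank (completion k P \<sigma>)"
proof -
  have A: "completion k (blockA P r s) \<sigma> \<in> carrier_mat (dim_row P - r) s"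
    and C: "completion k (blockC P r s) \<sigma> \<in> carrier_mat r (dim_col P - s)"
    using completion_carrier by (auto simp: blockA_def blockC_def)
  have B: "mat (dim_row P - r) (dim_col P - s) (\<lambda>(i,j). aff_eval k (P $$ (i, s + j)) \<sigma>)
      \<in> carrier_mat (dim_row P - r) (dim_col P - s)" by simp
  note X = completion_upper_block[OF z r s, of k \<sigma>]
  show "mat_rank (completion k P \<sigma>) \<le> mat_rank (completion k (blockA P r s) \<sigma>) + (dim_col P - s)"
    unfolding X by (rule rank_upper_block_le_left[OF A B C])
  show "mat_rank (completion k P \<sigma>) \<le> (dim_row P - r) + mat_rank (completion k (blockC P r s) \<sigma>)"
    unfolding X by (rule rank_upper_block_le_right[OF A B C])
  show "mat_rank (completion k (blockA P r s) \<sigma>) + mat_rank (completion k (blockC P r s) \<sigma>)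
      \<le> mat_rank (completion k P \<sigma>)"
    unfolding X by (rule rank_upper_block_ge[OF A B C])
qed

lemma aci_glue_assignments:
  fixes M :: "'a::comm_ring_1 aff mat"
  assumes aci: "aci_matrix k M"
  obtains \<sigma> where
    "\<And>l j. l < dim_row M \<Longrightarrow> j < dim_col M \<Longrightarrow> j \<in> F \<Longrightarrow>
       aff_eval k (M $$ (l,j)) \<sigma> = aff_eval k (M $$ (l,j)) \<sigma>1"
    and "\<And>l j. l < dim_row M \<Longrightarrow> j < dim_col M \<Longrightarrow> j \<notin> F \<Longrightarrow>
       aff_eval k (M $$ (l,j)) \<sigma> = aff_eval k (M $$ (l,j)) \<sigma>2"
proof
  \<comment> \<open>By the ACI condition, the indeterminates in \<open>S\<close> occur only in columns of \<open>F\<close>.\<close>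
  define S where "S = {v. \<exists>i<dim_row M. \<exists>j\<in>F. j < dim_col M \<and> (M $$ (i,j)) v \<noteq> 0}"
  let ?\<sigma> = "\<lambda>v. if v \<in> S then \<sigma>1 v else \<sigma>2 v"
  fix l j assume l: "l < dim_row M" and j: "j < dim_col M"
  {
    assume "j \<in> F"
    hence "(M $$ (l,j)) v * ?\<sigma> v = (M $$ (l,j)) v * \<sigma>1 v" for v
      using l j unfolding S_def by auto
    thus "aff_eval k (M $$ (l,j)) ?\<sigma> = aff_eval k (M $$ (l,j)) \<sigma>1" unfolding aff_eval_def by simp
  next
    assume jF: "j \<notin> F"
    have "v \<notin> S" if "v \<in> {1..k}" "(M $$ (l,j)) v \<noteq> 0" for v
      using aci that l j jF unfolding S_def aci_matrix_def by blast
    hence "(M $$ (l,j)) v * ?\<sigma> v = (M $$ (l,j)) v * \<sigma>2 v" if "v \<in> {1..k}" for v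
      using that by (cases "(M $$ (l,j)) v = 0") auto
    thus "aff_eval k (M $$ (l,j)) ?\<sigma> = aff_eval k (M $$ (l,j)) \<sigma>2"
      unfolding aff_eval_def by (intro arg_cong2[where f = "(+)"] sum.cong) auto
  }
qed

section \<open>The matrix R M Q_F and its zero block\<close>

lemma col_order_props:
  assumes F: "F \<subseteq> {0..<n}"
  shows "length (col_order n F) = n" "distinct (col_order n F)" "set (col_order n F) = {0..<n}"
proof -
  have finF: "finite F" using F finite_subset by blast
  have "card F + card ({0..<n} - F) = n"
    using card_Diff_subset[OF finF F] card_mono[OF _ F] by simp
  thus "length (col_order n F) = n" unfolding col_order_def by simp
  show "distinct (col_order n F)" unfolding col_order_def using finF by auto
  show "set (col_order n F) = {0..<n}" unfolding col_order_def using finF F by auto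
qed

lemma col_order_bij:
  assumes "F \<subseteq> {0..<n}"
  shows "bij_betw (\<lambda>j. col_order n F ! j) {..<n} {..<n}"
  using bij_betw_nth[OF col_order_props(2)[OF assms]] col_order_props(1,3)[OF assms]
  by (simp add: atLeast0LessThan)

lemma col_order_nth_in_iff:
  assumes F: "F \<subseteq> {0..<n}" and j: "j < n"
  shows "col_order n F ! j \<in> F \<longleftrightarrow> j < card F"
proof -
  have finF: "finite F" using F finite_subset by blast
  show ?thesis
  proof (cases "j < card F")
    case True
    hence "col_order n F ! j = sorted_list_of_set F ! j"
      unfolding col_order_def using finF by (simp add: nth_append)
    moreover have "sorted_list_of_set F ! j \<in> F" using True finF nth_mem[of j "sorted_list_of_set F"] by simp
    ultimately show ?thesis using True by simp
  next
    case False
    have "card F + card ({0..<n} - F) = n" using card_Diff_subset[OF finF F] card_mono[OF _ F] by simp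
    hence jl: "j - card F < length (sorted_list_of_set ({0..<n} - F))" using j False by simp
    have "col_order n F ! j = sorted_list_of_set ({0..<n} - F) ! (j - card F)"
      unfolding col_order_def using False finF by (simp add: nth_append)
    moreover have "sorted_list_of_set ({0..<n} - F) ! (j - card F) \<in> {0..<n} - F"
      using nth_mem[OF jl] by simp
    ultimately show ?thesis using False by simp
  qed
qed

definition block_form :: "'a::comm_ring_1 mat \<Rightarrow> 'a aff mat \<Rightarrow> nat set \<Rightarrow> 'a aff mat" where
  "block_form R M F = rmult (lmult R M) (Q_mat (dim_col M) F)"

lemma block_form_dims [simp]:
  "dim_row (block_form R M F) = dim_row R" "dim_col (block_form R M F) = dim_col M"
  unfolding block_form_def rmult_def lmult_def Q_mat_def by simp_all

lemma block_form_eq: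
  assumes R: "R \<in> carrier_mat m m" and m: "dim_row M = m" and F: "F \<subseteq> {0..<dim_col M}"
  shows "block_form R M F = mat m (dim_col M)
           (\<lambda>(i,j) v. \<Sum>l<m. R $$ (i,l) * (M $$ (l, col_order (dim_col M) F ! j)) v)"
    (is "_ = ?rhs")
proof (rule eq_matI)
  fix i j assume "i < dim_row ?rhs" "j < dim_col ?rhs"
  hence i: "i < m" and j: "j < dim_col M" by auto
  let ?\<pi> = "col_order (dim_col M) F ! j"
  have \<pi>: "?\<pi> < dim_col M" using bij_betwE[OF col_order_bij[OF F]] j by auto
  have dims: "dim_row (lmult R M) = m" "dim_col (lmult R M) = dim_col M"
    using R by (simp_all add: lmult_def)
  have "block_form R M F $$ (i,j) =
      (\<lambda>v. \<Sum>l'<dim_col M. (lmult R M $$ (i,l')) v * (if l' = ?\<pi> then 1 else 0))"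
    unfolding block_form_def rmult_def Q_mat_def using i j dims by auto
  also have "\<dots> = (\<lambda>v. \<Sum>l'<dim_col M. (if l' = ?\<pi> then (lmult R M $$ (i,l')) v else 0))"
    by (intro ext sum.cong) auto
  also have "\<dots> = lmult R M $$ (i, ?\<pi>)" using \<pi> by (simp add: sum.delta')
  also have "\<dots> = ?rhs $$ (i,j)" using i j \<pi> R by (simp add: lmult_def)
  finally show "block_form R M F $$ (i,j) = ?rhs $$ (i,j)" .
qed (use R in \<open>auto simp: block_form_def rmult_def lmult_def Q_mat_def\<close>)

lemma aff_eval_block_form:
  fixes M :: "'a::comm_ring_1 aff mat"
  assumes R: "R \<in> carrier_mat m m" and m: "dim_row M = m" and F: "F \<subseteq> {0..<dim_col M}"
    and i: "i < m" and j: "j < dim_col M"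
  shows "aff_eval k (block_form R M F $$ (i,j)) \<sigma> =
           (\<Sum>l<m. R $$ (i,l) * aff_eval k (M $$ (l, col_order (dim_col M) F ! j)) \<sigma>)"
  unfolding block_form_eq[OF R m F] using i j by (simp add: aff_eval_lincomb)

lemma completion_block_form:
  fixes M :: "'a::comm_ring_1 aff mat"
  assumes R: "R \<in> carrier_mat m m" and m: "dim_row M = m" and F: "F \<subseteq> {0..<dim_col M}"
  shows "completion k (block_form R M F) \<sigma> =
     mat m (dim_col M) (\<lambda>(i,j). (R * completion k M \<sigma>) $$ (i, col_order (dim_col M) F ! j))"
    (is "_ = ?rhs")
proof (rule eq_matI)
  fix i j assume "i < dim_row ?rhs" "j < dim_col ?rhs"
  hence i: "i < m" and j: "j < dim_col M" by auto
  let ?\<pi> = "col_order (dim_col M) F ! j"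
  have \<pi>: "?\<pi> < dim_col M" using bij_betwE[OF col_order_bij[OF F]] j by auto
  have "completion k (block_form R M F) \<sigma> $$ (i,j) =
      aff_eval k (\<lambda>v. \<Sum>l<m. R $$ (i,l) * (M $$ (l, ?\<pi>)) v) \<sigma>"
    unfolding block_form_eq[OF R m F] using i j by simp
  also have "\<dots> = (\<Sum>l<m. R $$ (i,l) * completion k M \<sigma> $$ (l, ?\<pi>))"
    unfolding aff_eval_lincomb using \<pi> m by simp
  also have "\<dots> = ?rhs $$ (i,j)"
    using i j \<pi> R m by (auto simp: scalar_prod_def lessThan_atLeast0 intro!: sum.cong)
  finally show "completion k (block_form R M F) \<sigma> $$ (i,j) = ?rhs $$ (i,j)" .
qed (use R m in \<open>simp_all add: block_form_eq[OF R m F]\<close>)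

lemma rank_completion_block_form:
  fixes M :: "'a::field aff mat"
  assumes R: "R \<in> carrier_mat m m" and inv: "invertible_mat R" and m: "dim_row M = m"
    and F: "F \<subseteq> {0..<dim_col M}"
  shows "mat_rank (completion k (block_form R M F) \<sigma>) = mat_rank (completion k M \<sigma>)"
proof -
  have X: "completion k M \<sigma> \<in> carrier_mat m (dim_col M)" using completion_carrier[of k M \<sigma>] m by simp
  have RX: "R * completion k M \<sigma> \<in> carrier_mat m (dim_col M)" using mult_carrier_mat[OF R X] .
  show ?thesis unfolding completion_block_form[OF R m F]
    using rank_permute_cols[OF RX col_order_bij[OF F]] rank_mult_invertible[OF R inv X] by simp
qed

definition zero_block :: "'a::field aff mat \<Rightarrow> nat set \<Rightarrow> 'a mat \<Rightarrow> nat \<Rightarrow> bool" where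
  "zero_block M F R r \<longleftrightarrow> F \<subseteq> {0..<dim_col M} \<and> R \<in> carrier_mat (dim_row M) (dim_row M) \<and>
     invertible_mat R \<and> r \<le> dim_row M \<and> zero_lower_left (block_form R M F) r (card F)"

lemma zero_block_dims:
  assumes "zero_block M F R r"
  shows "r \<le> dim_row M" and "card F \<le> dim_col M"
  using assms card_mono[of "{0..<dim_col M}" F] unfolding zero_block_def by auto

lemma factor_like_iff_zero_block:
  "factor_like Z k M F \<longleftrightarrow> (\<exists>R r. zero_block M F R r \<and> Z r (card F) (dim_row M) (dim_col M) \<and>
     FRmR k (blockA (block_form R M F) r (card F)) \<and> FCmR k (blockC (block_form R M F) r (card F)))"
  unfolding factor_like_def zero_block_def block_form_def Let_def by blast

lemma rank_bounds_zero_block: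
  fixes M :: "'a::field aff mat"
  assumes zb: "zero_block M F R r"
  defines "P \<equiv> block_form R M F" and "s \<equiv> card F"
  shows "mat_rank (completion k M \<sigma>) \<le> mat_rank (completion k (blockA P r s) \<sigma>) + (dim_col M - s)"
    and "mat_rank (completion k M \<sigma>) \<le> (dim_row M - r) + mat_rank (completion k (blockC P r s) \<sigma>)"
    and "mat_rank (completion k (blockA P r s) \<sigma>) + mat_rank (completion k (blockC P r s) \<sigma>)
           \<le> mat_rank (completion k M \<sigma>)"
    and "mat_rank (completion k (blockA P r s) \<sigma>) \<le> dim_row M - r"
    and "mat_rank (completion k (blockC P r s) \<sigma>) \<le> dim_col M - s"
proof -
  have F: "F \<subseteq> {0..<dim_col M}" and R: "R \<in> carrier_mat (dim_row M) (dim_row M)"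
    and inv: "invertible_mat R" and r: "r \<le> dim_row P" and z: "zero_lower_left P r s"
    using zb unfolding zero_block_def P_def s_def by auto
  have s: "s \<le> dim_col P" unfolding P_def s_def using card_mono[OF _ F] by simp
  have rk: "mat_rank (completion k P \<sigma>) = mat_rank (completion k M \<sigma>)"
    unfolding P_def using rank_completion_block_form[OF R inv refl F] .
  have dims: "dim_row P = dim_row M" "dim_col P = dim_col M" unfolding P_def using R by auto
  show "mat_rank (completion k M \<sigma>) \<le> mat_rank (completion k (blockA P r s) \<sigma>) + (dim_col M - s)"
    "mat_rank (completion k M \<sigma>) \<le> (dim_row M - r) + mat_rank (completion k (blockC P r s) \<sigma>)"
    "mat_rank (completion k (blockA P r s) \<sigma>) + mat_rank (completion k (blockC P r s) \<sigma>)
       \<le> mat_rank (completion k M \<sigma>)"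
    using rank_completion_upper_block[OF z r s, of k \<sigma>] rk dims by simp_all
  have "dim_row (blockA P r s) = dim_row M - r" "dim_col (blockC P r s) = dim_col M - s"
    using dims by (simp_all add: blockA_def blockC_def)
  thus "mat_rank (completion k (blockA P r s) \<sigma>) \<le> dim_row M - r"
    "mat_rank (completion k (blockC P r s) \<sigma>) \<le> dim_col M - s"
    using rank_le_dim_row[OF completion_carrier[of k "blockA P r s" \<sigma>]]
      rank_le_dim_col[OF completion_carrier[of k "blockC P r s" \<sigma>]] by simp_all
qed

lemma maxRank_le_zero_block:
  fixes M :: "'a::field aff mat"
  assumes "zero_block M F R r"
  shows "maxRank k M \<le> (dim_row M - r) + (dim_col M - card F)"
  using rank_bounds_zero_block(1,4)[OF assms] by (intro maxRank_leI) (meson add_le_mono1 le_trans)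

lemma FRmR_FCmR_zero_block:
  fixes M :: "'a::field aff mat"
  assumes zb: "zero_block M F R r"
    and ge: "(dim_row M - r) + (dim_col M - card F) \<le> maxRank k M"
  shows "FRmR k (blockA (block_form R M F) r (card F)) \<and> FCmR k (blockC (block_form R M F) r (card F))"
proof -
  let ?A = "blockA (block_form R M F) r (card F)" and ?C = "blockC (block_form R M F) r (card F)"
  note bounds = rank_bounds_zero_block[OF zb]
  obtain \<sigma> where \<sigma>: "mat_rank (completion k M \<sigma>) = maxRank k M" using maxRank_attained .
  have "dim_row M - r \<le> mat_rank (completion k ?A \<sigma>)" using bounds(1)[of k \<sigma>] \<sigma> ge by linarith
  hence "maxRank k ?A = dim_row M - r"
    using rank_completion_le_maxRank[of k ?A \<sigma>] maxRank_leI[of k ?A, OF bounds(4)] by simp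
  moreover have "dim_col M - card F \<le> mat_rank (completion k ?C \<sigma>)" using bounds(2)[of k \<sigma>] \<sigma> ge by linarith
  hence "maxRank k ?C = dim_col M - card F"
    using rank_completion_le_maxRank[of k ?C \<sigma>] maxRank_leI[of k ?C, OF bounds(5)] by simp
  ultimately show ?thesis
    using zb unfolding FRmR_def FCmR_def zero_block_def by (auto simp: blockA_def blockC_def)
qed

lemma completion_blocks_glue:
  fixes M :: "'a::field aff mat"
  assumes aci: "aci_matrix k M" and zb: "zero_block M F R r"
  defines "P \<equiv> block_form R M F" and "s \<equiv> card F"
  obtains \<sigma> where "completion k (blockA P r s) \<sigma> = completion k (blockA P r s) \<sigma>1"
    and "completion k (blockC P r s) \<sigma> = completion k (blockC P r s) \<sigma>2"
proof -
  have F: "F \<subseteq> {0..<dim_col M}" and R: "R \<in> carrier_mat (dim_row M) (dim_row M)"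
    and r: "r \<le> dim_row M" using zb unfolding zero_block_def by auto
  have sn: "s \<le> dim_col M" unfolding s_def using card_mono[OF _ F] by simp
  obtain \<sigma> where \<sigma>1: "\<And>l j. l < dim_row M \<Longrightarrow> j < dim_col M \<Longrightarrow> j \<in> F \<Longrightarrow>
       aff_eval k (M $$ (l,j)) \<sigma> = aff_eval k (M $$ (l,j)) \<sigma>1"
    and \<sigma>2: "\<And>l j. l < dim_row M \<Longrightarrow> j < dim_col M \<Longrightarrow> j \<notin> F \<Longrightarrow>
       aff_eval k (M $$ (l,j)) \<sigma> = aff_eval k (M $$ (l,j)) \<sigma>2"
    using aci_glue_assignments[OF aci] by metis
  let ?\<pi> = "\<lambda>j. col_order (dim_col M) F ! j"
  have \<pi>: "?\<pi> j < dim_col M" if "j < dim_col M" for j using bij_betwE[OF col_order_bij[OF F]] that by auto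
  have A: "aff_eval k (P $$ (i,j)) \<sigma> = aff_eval k (P $$ (i,j)) \<sigma>1" if i: "i < dim_row M" and j: "j < s" for i j
  proof -
    have jn: "j < dim_col M" using j sn by simp
    have "?\<pi> j \<in> F" using col_order_nth_in_iff[OF F jn] j unfolding s_def by simp
    thus ?thesis unfolding P_def aff_eval_block_form[OF R refl F i jn] using \<sigma>1 \<pi>[OF jn] by simp
  qed
  have C: "aff_eval k (P $$ (i,j)) \<sigma> = aff_eval k (P $$ (i,j)) \<sigma>2"
    if i: "i < dim_row M" and j: "s \<le> j" "j < dim_col M" for i j
  proof -
    have "?\<pi> j \<notin> F" using col_order_nth_in_iff[OF F j(2)] j unfolding s_def by simp
    thus ?thesis unfolding P_def aff_eval_block_form[OF R refl F i j(2)] using \<sigma>2 \<pi>[OF j(2)] by simp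
  qed
  have dims: "dim_row P = dim_row M" "dim_col P = dim_col M" unfolding P_def using R by auto
  show thesis
  proof (rule that)
    show "completion k (blockA P r s) \<sigma> = completion k (blockA P r s) \<sigma>1"
      by (rule eq_matI) (use A dims in \<open>auto simp: blockA_def\<close>)
    show "completion k (blockC P r s) \<sigma> = completion k (blockC P r s) \<sigma>2"
      by (rule eq_matI) (use C dims r sn in \<open>auto simp: blockC_def\<close>)
  qed
qed

lemma maxRank_eq_zero_block:
  fixes M :: "'a::field aff mat"
  assumes aci: "aci_matrix k M" and zb: "zero_block M F R r" and F: "F \<noteq> {}"
    and big: "dim_col M \<le> r + card F"
    and fr: "FRmR k (blockA (block_form R M F) r (card F))"
    and fc: "FCmR k (blockC (block_form R M F) r (card F))"
  shows "maxRank k M = (dim_row M - r) + (dim_col M - card F)"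
proof (rule antisym[OF maxRank_le_zero_block[OF zb]])
  let ?A = "blockA (block_form R M F) r (card F)" and ?C = "blockC (block_form R M F) r (card F)"
  have R: "R \<in> carrier_mat (dim_row M) (dim_row M)" and "finite F"
    using zb finite_subset unfolding zero_block_def by auto
  hence "dim_col ?A \<noteq> 0" using F by (simp add: blockA_def)
  hence "maxRank k ?A = dim_row M - r" using fr R unfolding FRmR_def by (simp add: blockA_def)
  moreover obtain \<sigma>1 where "mat_rank (completion k ?A \<sigma>1) = maxRank k ?A"
    using maxRank_attained .
  ultimately have \<sigma>1: "mat_rank (completion k ?A \<sigma>1) = dim_row M - r" by simp
  obtain \<sigma>2 where \<sigma>2: "dim_col M - card F \<le> mat_rank (completion k ?C \<sigma>2)"
  \<comment> \<open>For \<open>r = 0\<close> the block \<open>C\<close> has no rows and \<open>FCmR\<close> says nothing;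
    then the size condition on the zero block leaves \<open>C\<close> without columns.\<close>
  proof (cases "r = 0")
    case True
    thus thesis using that big by simp
  next
    case False
    hence "maxRank k ?C = dim_col M - card F" using fc R unfolding FCmR_def by (simp add: blockC_def)
    moreover obtain \<sigma> where "mat_rank (completion k ?C \<sigma>) = maxRank k ?C" using maxRank_attained .
    ultimately show thesis using that[of \<sigma>] by simp
  qed
  obtain \<sigma> where "completion k ?A \<sigma> = completion k ?A \<sigma>1" "completion k ?C \<sigma> = completion k ?C \<sigma>2"
    by (rule completion_blocks_glue[OF aci zb])
  hence "(dim_row M - r) + (dim_col M - card F) \<le> mat_rank (completion k M \<sigma>)"
    using rank_bounds_zero_block(3)[OF zb, of k \<sigma>] \<sigma>1 \<sigma>2 by simp
  also have "\<dots> \<le> maxRank k M" by (rule rank_completion_le_maxRank)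
  finally show "(dim_row M - r) + (dim_col M - card F) \<le> maxRank k M" .
qed

lemma factor_like_of_zero_block:
  fixes M :: "'a::field aff mat"
  assumes zb: "zero_block M F R r"
    and rank: "maxRank k M + r + card F = dim_row M + dim_col M" and Z: "Z r (card F) (dim_row M) (dim_col M)"
  shows "factor_like Z k M F"
proof -
  have "(dim_row M - r) + (dim_col M - card F) \<le> maxRank k M" using rank zero_block_dims[OF zb] by linarith
  thus ?thesis unfolding factor_like_iff_zero_block using zb Z FRmR_FCmR_zero_block[OF zb] by blast
qed

section \<open>Zero blocks as annihilators\<close>

definition annihilates :: "'a::comm_ring_1 aff mat \<Rightarrow> nat set \<Rightarrow> 'a vec \<Rightarrow> bool" where
  "annihilates M F w \<longleftrightarrow> (\<forall>j\<in>F. \<forall>v. (\<Sum>l<dim_row M. w $ l * (M $$ (l,j)) v) = 0)"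

lemma annihilates_mono: "annihilates M F w \<Longrightarrow> G \<subseteq> F \<Longrightarrow> annihilates M G w"
  unfolding annihilates_def by blast

lemma annihilates_Un: "annihilates M F w \<Longrightarrow> annihilates M G w \<Longrightarrow> annihilates M (F \<union> G) w"
  unfolding annihilates_def by blast

lemma annihilates_in_col_span:
  fixes M :: "'a::comm_ring_1 aff mat"
  assumes Z: "Z \<in> carrier_mat (dim_row M) N" and w: "in_col_span Z S w"
    and cols: "\<And>t. t \<in> S \<Longrightarrow> t < N \<Longrightarrow> annihilates M F (col Z t)"
  shows "annihilates M F w"
  unfolding annihilates_def
proof (intro ballI allI)
  fix j v assume j: "j \<in> F"
  obtain c where c: "c \<in> carrier_vec N" "\<And>t. t < N \<Longrightarrow> t \<notin> S \<Longrightarrow> c $ t = 0" "w = Z *\<^sub>v c"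
    using w Z unfolding in_col_span_def by auto
  have col_zero: "c $ t * (\<Sum>l<dim_row M. Z $$ (l,t) * (M $$ (l,j)) v) = 0" if "t < N" for t
  proof (cases "t \<in> S")
    case True
    thus ?thesis using cols[OF True that] j Z that unfolding annihilates_def by simp
  qed (use c(2) that in simp)
  have "(\<Sum>l<dim_row M. w $ l * (M $$ (l,j)) v) =
      (\<Sum>l<dim_row M. \<Sum>t<N. c $ t * (Z $$ (l,t) * (M $$ (l,j)) v))"
  proof (intro sum.cong refl)
    fix l assume "l \<in> {..<dim_row M}"
    hence "w $ l = (\<Sum>t<N. Z $$ (l,t) * c $ t)" unfolding c(3) by (intro mult_mat_vec_index_sum[OF Z c(1)]) simp
    thus "w $ l * (M $$ (l,j)) v = (\<Sum>t<N. c $ t * (Z $$ (l,t) * (M $$ (l,j)) v))"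
      by (simp add: sum_distrib_right) (simp add: mult_ac)
  qed
  also have "\<dots> = (\<Sum>t<N. c $ t * (\<Sum>l<dim_row M. Z $$ (l,t) * (M $$ (l,j)) v))"
    by (subst sum.swap) (simp add: sum_distrib_left)
  also have "\<dots> = 0" using col_zero by simp
  finally show "(\<Sum>l<dim_row M. w $ l * (M $$ (l,j)) v) = 0" .
qed

lemma zero_lower_left_block_form_iff:
  fixes M :: "'a::comm_ring_1 aff mat"
  assumes R: "R \<in> carrier_mat m m" and m: "dim_row M = m" and F: "F \<subseteq> {0..<dim_col M}"
    and r: "r \<le> m"
  shows "zero_lower_left (block_form R M F) r (card F) \<longleftrightarrow> (\<forall>t<r. annihilates M F (row R (m - r + t)))"
proof -
  let ?\<pi> = "\<lambda>j. col_order (dim_col M) F ! j"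
  have sn: "card F \<le> dim_col M" using card_mono[OF _ F] by simp
  have entry: "block_form R M F $$ (m - r + t, j) =
      (\<lambda>v. \<Sum>l<dim_row M. row R (m - r + t) $ l * (M $$ (l, ?\<pi> j)) v)" if "t < r" "j < card F" for t j
    unfolding block_form_eq[OF R m F] using that r sn R m by auto
  have \<pi>F: "?\<pi> j \<in> F" if "j < card F" for j using col_order_nth_in_iff[OF F] that sn by simp
  have F\<pi>: "\<exists>j<card F. ?\<pi> j = f" if "f \<in> F" for f
  proof -
    have "f \<in> ?\<pi> ` {..<dim_col M}"
      using bij_betw_imp_surj_on[OF col_order_bij[OF F]] that F by auto
    then obtain j where "j < dim_col M" "?\<pi> j = f" by blast
    thus ?thesis using col_order_nth_in_iff[OF F] that by auto
  qed
  show ?thesis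
    unfolding zero_lower_left_def block_form_dims carrier_matD(1)[OF R]
  proof (intro iffI allI impI)
    fix t assume z: "\<forall>t<r. \<forall>j<card F. block_form R M F $$ (m - r + t, j) = (\<lambda>v. 0)" and t: "t < r"
    show "annihilates M F (row R (m - r + t))" unfolding annihilates_def
    proof (intro ballI allI)
      fix f v assume "f \<in> F"
      then obtain j where j: "j < card F" "?\<pi> j = f" using F\<pi> by blast
      show "(\<Sum>l<dim_row M. row R (m - r + t) $ l * (M $$ (l,f)) v) = 0"
        using fun_cong[OF z[rule_format, OF t j(1)], of v] entry[OF t j(1)] j(2) by simp
    qed
  next
    fix t j assume a: "\<forall>t<r. annihilates M F (row R (m - r + t))" and t: "t < r" and j: "j < card F"
    show "block_form R M F $$ (m - r + t, j) = (\<lambda>v. 0)"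
      using a[rule_format, OF t] \<pi>F[OF j] unfolding entry[OF t j] annihilates_def by auto
  qed
qed

lemma annihilating_cols_of_zero_block:
  fixes M :: "'a::field aff mat"
  assumes zb: "zero_block M F R r"
  defines "W \<equiv> mat (dim_row M) r (\<lambda>(l,t). R $$ (dim_row M - r + t, l))"
  shows "indep_cols W {..<r}" and "\<And>t. t < r \<Longrightarrow> annihilates M F (col W t)"
proof -
  let ?m = "dim_row M"
  have R: "R \<in> carrier_mat ?m ?m" and inv: "invertible_mat R" and r: "r \<le> ?m"
    and F: "F \<subseteq> {0..<dim_col M}" and z: "zero_lower_left (block_form R M F) r (card F)"
    using zb unfolding zero_block_def by auto
  have RT: "transpose_mat R \<in> carrier_mat ?m ?m" using R by simp
  have sub: "(+) (?m - r) ` {..<r} \<subseteq> {..<?m}" using r by auto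
  have "indep_cols (transpose_mat R) ((+) (?m - r) ` {..<r})"
    by (rule indep_cols_mono[OF indep_cols_invertible[OF RT invertible_mat_transpose[OF R inv]] sub])
  hence "indep_cols (mat ?m r (\<lambda>(l,t). transpose_mat R $$ (l, ?m - r + t))) {..<r}"
    using indep_cols_select_iff[OF RT _ sub] by simp
  moreover have "W = mat ?m r (\<lambda>(l,t). transpose_mat R $$ (l, ?m - r + t))"
    unfolding W_def using R r by (intro eq_matI) auto
  ultimately show "indep_cols W {..<r}" by simp
  have "col W t = row R (?m - r + t)" if "t < r" for t
    unfolding W_def using that R r by (intro eq_vecI) auto
  thus "annihilates M F (col W t)" if "t < r" for t
    using zero_lower_left_block_form_iff[OF R refl F r] z that by simp
qed

lemma zero_block_of_annihilating_cols:
  fixes M :: "'a::field aff mat"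
  assumes W: "W \<in> carrier_mat (dim_row M) p" and ind: "indep_cols W {..<p}"
    and G: "G \<subseteq> {0..<dim_col M}" and ann: "\<And>t. t < p \<Longrightarrow> annihilates M G (col W t)"
  obtains R where "zero_block M G R p"
proof -
  let ?m = "dim_row M"
  have pm: "p \<le> ?m" using card_le_rank_if_indep_cols[OF W ind] rank_le_dim_row[OF W] by simp
  obtain R where R: "R \<in> carrier_mat ?m ?m" "invertible_mat R"
    and rows: "\<forall>t<p. \<forall>l<?m. R $$ (?m - p + t, l) = W $$ (l, t)"
    using invertible_mat_with_last_rows[OF W ind] by blast
  have "row R (?m - p + t) = col W t" if "t < p" for t
    using rows that R W pm by (intro eq_vecI) auto
  hence "zero_lower_left (block_form R M G) p (card G)"
    using zero_lower_left_block_form_iff[OF R(1) refl G pm] ann by simp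
  thus thesis using that R G pm unfolding zero_block_def by blast
qed

lemma zero_blocks_Int_Un:
  fixes M :: "'a::field aff mat"
  assumes zb1: "zero_block M F1 R1 r1" and zb2: "zero_block M F2 R2 r2"
  obtains RI p RU q where "zero_block M (F1 \<inter> F2) RI p" and "zero_block M (F1 \<union> F2) RU q"
    and "p + q = r1 + r2"
proof -
  let ?m = "dim_row M"
  define W1 where "W1 = mat ?m r1 (\<lambda>(l,t). R1 $$ (?m - r1 + t, l))"
  define W2 where "W2 = mat ?m r2 (\<lambda>(l,t). R2 $$ (?m - r2 + t, l))"
  note W1 = annihilating_cols_of_zero_block[OF zb1, folded W1_def]
  note W2 = annihilating_cols_of_zero_block[OF zb2, folded W2_def]
  define Z where "Z = mat ?m (r1 + r2) (\<lambda>(l,t). if t < r1 then W1 $$ (l,t) else W2 $$ (l, t - r1))"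
  have Z: "Z \<in> carrier_mat ?m (r1 + r2)" unfolding Z_def by simp
  have "W1 \<in> carrier_mat ?m r1" "W2 \<in> carrier_mat ?m r2" unfolding W1_def W2_def by simp_all
  note Z_cols = indep_cols_append_cols[OF this, folded Z_def]
  define A where "A = {..<r1}"
  define B where "B = (+) r1 ` {..<r2}"
  have disj: "A \<inter> B = {}" unfolding A_def B_def by auto
  have colA: "annihilates M F1 (col Z t)" if "t \<in> A" for t
    using W1(2) Z_cols(3) that unfolding A_def by auto
  have colB: "annihilates M F2 (col Z t)" if "t \<in> B" for t
    using W2(2) Z_cols(4) that unfolding B_def by auto
  obtain p q WI WU where pq: "p + q = card A + card B"
    and WI: "WI \<in> carrier_mat ?m p" "indep_cols WI {..<p}" "\<And>j. j < p \<Longrightarrow> in_col_span Z (A \<union> B) (col WI j)"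
    and WU: "WU \<in> carrier_mat ?m q" "indep_cols WU {..<q}"
      "\<And>j. j < q \<Longrightarrow> in_col_span Z A (col WU j)" "\<And>j. j < q \<Longrightarrow> in_col_span Z B (col WU j)"
    using indep_cols_sum_and_intersection[OF Z disj] Z_cols(1,2) W1(1) W2(1) unfolding A_def B_def by blast
  have F: "F1 \<inter> F2 \<subseteq> {0..<dim_col M}" "F1 \<union> F2 \<subseteq> {0..<dim_col M}"
    using zb1 zb2 unfolding zero_block_def by auto
  have "annihilates M (F1 \<inter> F2) (col Z t)" if "t \<in> A \<union> B" for t
    using that colA colB annihilates_mono by blast
  hence "annihilates M (F1 \<inter> F2) (col WI j)" if "j < p" for j
    using annihilates_in_col_span[OF Z WI(3)[OF that]] by blast
  then obtain RI where RI: "zero_block M (F1 \<inter> F2) RI p"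
    using zero_block_of_annihilating_cols[OF WI(1,2) F(1)] by blast
  have "annihilates M (F1 \<union> F2) (col WU j)" if "j < q" for j
    using annihilates_Un[OF annihilates_in_col_span[OF Z WU(3)[OF that] colA]
        annihilates_in_col_span[OF Z WU(4)[OF that] colB]] .
  then obtain RU where RU: "zero_block M (F1 \<union> F2) RU q"
    using zero_block_of_annihilating_cols[OF WU(1,2) F(2)] by blast
  have "card A + card B = r1 + r2" unfolding A_def B_def by (simp add: card_image)
  thus thesis using that RI RU pq by simp
qed

lemma factor_like_Int_Un:
  fixes M :: "'a::field aff mat"
  assumes aci: "aci_matrix k M" and ne: "F1 \<inter> F2 \<noteq> {}"
    and f1: "factor_like Z k M F1" and f2: "factor_like Z k M F2"
    and Z_big: "\<And>r s. Z r s (dim_row M) (dim_col M) \<Longrightarrow> dim_col M \<le> r + s"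
    and Z_sum: "\<And>r s r' s'. r + s = r' + s' \<Longrightarrow> Z r s (dim_row M) (dim_col M) = Z r' s' (dim_row M) (dim_col M)"
  shows "factor_like Z k M (F1 \<inter> F2) \<and> factor_like Z k M (F1 \<union> F2)"
proof -
  let ?m = "dim_row M" and ?n = "dim_col M"
  obtain R1 r1 where zb1: "zero_block M F1 R1 r1" and Z1: "Z r1 (card F1) ?m ?n"
    and fr1: "FRmR k (blockA (block_form R1 M F1) r1 (card F1))"
    and fc1: "FCmR k (blockC (block_form R1 M F1) r1 (card F1))"
    using f1 unfolding factor_like_iff_zero_block by blast
  obtain R2 r2 where zb2: "zero_block M F2 R2 r2"
    and fr2: "FRmR k (blockA (block_form R2 M F2) r2 (card F2))"
    and fc2: "FCmR k (blockC (block_form R2 M F2) r2 (card F2))" and Z2: "Z r2 (card F2) ?m ?n"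
    using f2 unfolding factor_like_iff_zero_block by blast
  have "F1 \<noteq> {}" "F2 \<noteq> {}" using ne by auto
  hence e1: "maxRank k M + r1 + card F1 = ?m + ?n" and e2: "maxRank k M + r2 + card F2 = ?m + ?n"
    using maxRank_eq_zero_block[OF aci zb1 _ Z_big[OF Z1] fr1 fc1] zero_block_dims[OF zb1]
      maxRank_eq_zero_block[OF aci zb2 _ Z_big[OF Z2] fr2 fc2] zero_block_dims[OF zb2] by simp_all
  obtain RI p RU q where I: "zero_block M (F1 \<inter> F2) RI p" and U: "zero_block M (F1 \<union> F2) RU q"
    and pq: "p + q = r1 + r2"
    using zero_blocks_Int_Un[OF zb1 zb2] by blast
  have uI: "maxRank k M + p + card (F1 \<inter> F2) \<le> ?m + ?n"
    using maxRank_le_zero_block[OF I, of k] zero_block_dims[OF I] by linarith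
  have uU: "maxRank k M + q + card (F1 \<union> F2) \<le> ?m + ?n"
    using maxRank_le_zero_block[OF U, of k] zero_block_dims[OF U] by linarith
  have "finite F1" "finite F2" using zb1 zb2 finite_subset unfolding zero_block_def by auto
  hence "card (F1 \<inter> F2) + card (F1 \<union> F2) = card F1 + card F2" using card_Un_Int by fastforce
  hence eqI: "p + card (F1 \<inter> F2) = r1 + card F1" and eqU: "q + card (F1 \<union> F2) = r1 + card F1"
    using e1 e2 uI uU pq by linarith+
  have "Z p (card (F1 \<inter> F2)) ?m ?n" "Z q (card (F1 \<union> F2)) ?m ?n"
    using Z_sum[OF eqI] Z_sum[OF eqU] Z1 by simp_all
  thus ?thesis using factor_like_of_zero_block[OF I] factor_like_of_zero_block[OF U] eqI eqU e1 by simp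
qed

theorem theorem5p5:
  fixes M :: "'a::field aff mat" and k :: nat and F1 F2 :: "nat set"
  assumes "aci_matrix k M"
    and "F1 \<inter> F2 \<noteq> {}"
  shows "(factor_set k M F1 \<and> factor_set k M F2 \<longrightarrow>
            factor_set k M (F1 \<inter> F2) \<and> factor_set k M (F1 \<union> F2)) \<and>
         (semifactor_set k M F1 \<and> semifactor_set k M F2 \<longrightarrow>
            semifactor_set k M (F1 \<inter> F2) \<and> semifactor_set k M (F1 \<union> F2))"
  unfolding factor_set_def semifactor_set_def
  by (intro conjI impI factor_like_Int_Un[OF assms]) auto

end
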